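(* Let $T$ be a completely non-unitary contraction on a separable infinite-dimensional complex Hilbert space $\mathcal{H}$ which is not an isometry, and suppose $\mathcal{D}_T\subseteq\mathcal{D}_{T^*}$ and $\dim\mathcal{D}_{T^*}<\infty$. Then $T$ is analytic if and only if $T$ has no non-zero eigenvalue.
   Context: For a contraction $T$ on $\mathcal{H}$, $\mathcal{D}_T=\overline{(I-T^*T)^{1/2}\mathcal{H}}$ and $\mathcal{D}_{T^*}=\overline{(I-TT^* )^{1/2}\mathcal{H}}$. A contraction is completely non-unitary if it has no nonzero reducing subspace on which it is unitary. $T$ is analytic if $\bigcap_{m\ge1}T^m\mathcal{H}=\{0\}$. *)

theory Defs
  imports "HOL-Analysis.Analysis"
begin

text \<open>Complex Hilbert spaces: a Banach space (over the reals) with a compatible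
complex scalar multiplication and an inner product (conjugate-linear in the first
argument) inducing the norm.\<close>

class chilbert = banach +
  fixes scaleC :: "complex \<Rightarrow> 'a \<Rightarrow> 'a" (infixr \<open>*\<^sub>C\<close> 75)
    and cinner :: "'a \<Rightarrow> 'a \<Rightarrow> complex"
  assumes scaleC_add_right: "a *\<^sub>C (x + y) = a *\<^sub>C x + a *\<^sub>C y"
    and scaleC_add_left: "(a + b) *\<^sub>C x = a *\<^sub>C x + b *\<^sub>C x"
    and scaleC_scaleC: "a *\<^sub>C (b *\<^sub>C x) = (a * b) *\<^sub>C x"
    and scaleC_one: "1 *\<^sub>C x = x"
    and scaleR_scaleC: "scaleR r x = complex_of_real r *\<^sub>C x"
    and cinner_conj: "cinner x y = cnj (cinner y x)"
    and cinner_add_left: "cinner (x + y) z = cinner x z + cinner y z"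
    and cinner_scaleC_left: "cinner (a *\<^sub>C x) y = cnj a * cinner x y"
    and cinner_self_norm: "cinner x x = complex_of_real ((norm x)\<^sup>2)"

definition separable_space :: "'a::topological_space itself \<Rightarrow> bool" where
  "separable_space _ \<longleftrightarrow> (\<exists>D::'a set. countable D \<and> closure D = UNIV)"

definition cspan :: "'a::chilbert set \<Rightarrow> 'a set" where
  "cspan B = {\<Sum>b\<in>F. c b *\<^sub>C b | F c. finite F \<and> F \<subseteq> B}"

definition finite_dim_set :: "'a::chilbert set \<Rightarrow> bool" where
  "finite_dim_set M \<longleftrightarrow> (\<exists>B. finite B \<and> cspan B = M)"

definition csubspace :: "'a::chilbert set \<Rightarrow> bool" where
  "csubspace M \<longleftrightarrow> 0 \<in> M \<and> (\<forall>x\<in>M. \<forall>y\<in>M. x + y \<in> M) \<and> (\<forall>c. \<forall>x\<in>M. c *\<^sub>C x \<in> M)"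

definition cblinear :: "('a::chilbert \<Rightarrow> 'a) \<Rightarrow> bool" where
  "cblinear T \<longleftrightarrow> bounded_linear T \<and> (\<forall>c x. T (c *\<^sub>C x) = c *\<^sub>C T x)"

definition contraction_op :: "('a::chilbert \<Rightarrow> 'a) \<Rightarrow> bool" where
  "contraction_op T \<longleftrightarrow> cblinear T \<and> (\<forall>x. norm (T x) \<le> norm x)"

definition isometry_op :: "('a::chilbert \<Rightarrow> 'a) \<Rightarrow> bool" where
  "isometry_op T \<longleftrightarrow> (\<forall>x. norm (T x) = norm x)"

definition adj :: "('a::chilbert \<Rightarrow> 'a) \<Rightarrow> 'a \<Rightarrow> 'a" where
  "adj T = (SOME S. \<forall>x y. cinner (T x) y = cinner x (S y))"

definition positive_op :: "('a::chilbert \<Rightarrow> 'a) \<Rightarrow> bool" where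
  "positive_op A \<longleftrightarrow> cblinear A \<and> (\<forall>x. Im (cinner (A x) x) = 0 \<and> Re (cinner (A x) x) \<ge> 0)"

definition op_sqrt :: "('a::chilbert \<Rightarrow> 'a) \<Rightarrow> 'a \<Rightarrow> 'a" where
  "op_sqrt A = (THE S. positive_op S \<and> S \<circ> S = A)"

definition defect_space :: "('a::chilbert \<Rightarrow> 'a) \<Rightarrow> 'a set" where
  "defect_space T = closure (range (op_sqrt (\<lambda>x. x - adj T (T x))))"

definition reducing_subspace :: "('a::chilbert \<Rightarrow> 'a) \<Rightarrow> 'a set \<Rightarrow> bool" where
  "reducing_subspace T M \<longleftrightarrow> csubspace M \<and> closed M \<and> T ` M \<subseteq> M \<and> adj T ` M \<subseteq> M"

definition unitary_on :: "('a::chilbert \<Rightarrow> 'a) \<Rightarrow> 'a set \<Rightarrow> bool" where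
  "unitary_on T M \<longleftrightarrow> (\<forall>x\<in>M. norm (T x) = norm x) \<and> T ` M = M"

definition completely_non_unitary :: "('a::chilbert \<Rightarrow> 'a) \<Rightarrow> bool" where
  "completely_non_unitary T \<longleftrightarrow>
     \<not> (\<exists>M. reducing_subspace T M \<and> M \<noteq> {0} \<and> unitary_on T M)"

definition analytic_op :: "('a::chilbert \<Rightarrow> 'a) \<Rightarrow> bool" where
  "analytic_op T \<longleftrightarrow> (\<Inter>m\<in>{1..}. range (T ^^ m)) = {0}"

definition eigenvalue :: "('a::chilbert \<Rightarrow> 'a) \<Rightarrow> complex \<Rightarrow> bool" where
  "eigenvalue T z \<longleftrightarrow> (\<exists>x. x \<noteq> 0 \<and> T x = z *\<^sub>C x)"

end

theory Submission
  imports Defs "HOL-Computational_Algebra.Fundamental_Theorem_Algebra"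
begin

text \<open>Let \<open>W = {x. T\<^sup>* T x = x}\<close> be the set of vectors on which \<open>T\<close> is isometric; it is the
  orthogonal complement of \<open>defect_space T\<close>. The inclusion of defect spaces makes \<open>W\<close>
  invariant under \<open>T\<close>, and since \<open>defect_space T\<^sup>*\<close> is finite-dimensional, \<open>W\<close> has finite
  codimension. The intersection of the subspaces \<open>T\<^sup>n W\<close> reduces \<open>T\<close> to a unitary, so it is
  zero by complete non-unitarity. A dimension count then shows that the hyperrange
  \<open>M = \<Inter>\<^sub>n T\<^sup>n H\<close> is finite-dimensional and, as \<open>T\<close> has finite-dimensional kernel, that
  \<open>T M = M\<close>. Hence if \<open>M \<noteq> 0\<close>, the restriction of \<open>T\<close> to \<open>M\<close> is invertible and has a nonzero
  eigenvalue; conversely, an eigenvector for a nonzero eigenvalue lies in \<open>M\<close>, so \<open>T\<close> is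
  analytic if and only if \<open>M = 0\<close>.\<close>

section \<open>Complex inner product spaces\<close>

lemma scaleC_zero_left [simp]: "0 *\<^sub>C (x::'a::chilbert) = 0"
  using scaleR_scaleC[of 0 x] by simp

lemma scaleC_zero_right [simp]: "a *\<^sub>C 0 = 0"
  using scaleC_add_right[of a 0 0] by simp

lemma scaleC_of_real: "complex_of_real r *\<^sub>C x = r *\<^sub>R x"
  by (simp add: scaleR_scaleC)

lemma scaleC_sum_right: "a *\<^sub>C (\<Sum>i\<in>F. f i) = (\<Sum>i\<in>F. a *\<^sub>C f i)"
  by (induction F rule: infinite_finite_induct) (auto simp: scaleC_add_right)

lemma cinner_add_right: "cinner x (y + z) = cinner x y + cinner x z"
  using cinner_conj[of x "y + z"] cinner_conj[of x y] cinner_conj[of x z] by (simp add: cinner_add_left)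

lemma cinner_scaleC_right: "cinner x (a *\<^sub>C y) = a * cinner x y"
  using cinner_conj[of x "a *\<^sub>C y"] cinner_conj[of x y] by (simp add: cinner_scaleC_left)

lemma cinner_zero_left [simp]: "cinner 0 x = 0"
  using cinner_add_left[of 0 0 x] by simp

lemma cinner_zero_right [simp]: "cinner x 0 = 0"
  using cinner_add_right[of x 0 0] by simp

lemma cinner_diff_left: "cinner (x - y) z = cinner x z - cinner y z"
  using cinner_add_left[of "x - y" y z] by simp

lemma cinner_diff_right: "cinner x (y - z) = cinner x y - cinner x z"
  using cinner_add_right[of x "y - z" z] by simp

lemma cinner_scaleR_left: "cinner (r *\<^sub>R x) y = r *\<^sub>R cinner x y"
  by (simp add: scaleR_scaleC cinner_scaleC_left scaleR_conv_of_real)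

lemma cinner_scaleR_right: "cinner x (r *\<^sub>R y) = r *\<^sub>R cinner x y"
  by (simp add: scaleR_scaleC cinner_scaleC_right scaleR_conv_of_real)

lemma power2_norm_eq_cinner: "(norm x)\<^sup>2 = Re (cinner x x)"
  by (simp add: cinner_self_norm)

lemma cinner_self_eq_0 [simp]: "cinner x x = 0 \<longleftrightarrow> x = 0"
  by (simp add: cinner_self_norm)

lemma power2_norm_add: "(norm (x + y))\<^sup>2 = (norm x)\<^sup>2 + (norm y)\<^sup>2 + 2 * Re (cinner x y)"
  using cinner_conj[of y x] by (simp add: power2_norm_eq_cinner cinner_add_left cinner_add_right)

lemma power2_norm_diff: "(norm (x - y))\<^sup>2 = (norm x)\<^sup>2 + (norm y)\<^sup>2 - 2 * Re (cinner x y)"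
  using power2_norm_add[of x "-y"] cinner_scaleR_right[of x "-1" y] by simp

lemma parallelogram_law:
  "(norm (x - y))\<^sup>2 = 2 * (norm x)\<^sup>2 + 2 * (norm (y::'a::chilbert))\<^sup>2 - (norm (x + y))\<^sup>2"
  using power2_norm_add[of x y] power2_norm_diff[of x y] by simp

lemma norm_scaleC: "norm (a *\<^sub>C x) = cmod a * norm x"
proof -
  have "cinner (a *\<^sub>C x) (a *\<^sub>C x) = (a * cnj a) * cinner x x"
    by (simp add: cinner_scaleC_left cinner_scaleC_right mult_ac)
  also have "\<dots> = complex_of_real ((cmod a * norm x)\<^sup>2)"
    by (simp add: cinner_self_norm complex_norm_square[symmetric] power_mult_distrib)
  finally have "(norm (a *\<^sub>C x))\<^sup>2 = (cmod a * norm x)\<^sup>2"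
    by (simp only: cinner_self_norm of_real_eq_iff)
  then show ?thesis
    by (simp add: power2_eq_iff_nonneg)
qed

lemma Re_cinner_le: "Re (cinner x y) \<le> norm x * norm y"
proof (cases "x = 0 \<or> y = 0")
  case True
  then show ?thesis by auto
next
  case False
  define u where "u = (1 / norm x) *\<^sub>R x"
  define v where "v = (1 / norm y) *\<^sub>R y"
  have "norm u = 1" "norm v = 1"
    using False by (auto simp: u_def v_def)
  then have "Re (cinner u v) \<le> 1"
    using power2_norm_diff[of u v] zero_le_power2[of "norm (u - v)"] by simp
  moreover have "Re (cinner u v) = Re (cinner x y) / (norm x * norm y)"
    by (simp add: u_def v_def cinner_scaleR_left cinner_scaleR_right)
  ultimately show ?thesis
    using False by (simp add: divide_le_eq)
qed

lemma norm_cinner_le: "cmod (cinner x y) \<le> norm x * norm y"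
proof (cases "cinner x y = 0")
  case True
  then show ?thesis by simp
next
  case False
  \<comment> \<open>rotate \<open>y\<close> by a unimodular factor making the inner product real and nonnegative\<close>
  define c where "c = cnj (cinner x y) / complex_of_real (cmod (cinner x y))"
  have "cinner x (c *\<^sub>C y) = (cinner x y * cnj (cinner x y)) / complex_of_real (cmod (cinner x y))"
    by (simp add: cinner_scaleC_right c_def mult.commute)
  also have "\<dots> = complex_of_real (cmod (cinner x y))"
    using False by (simp add: complex_norm_square[symmetric] power2_eq_square)
  finally have "cinner x (c *\<^sub>C y) = complex_of_real (cmod (cinner x y))" .
  then have "cmod (cinner x y) = Re (cinner x (c *\<^sub>C y))"
    by simp
  also have "\<dots> \<le> norm x * norm (c *\<^sub>C y)"
    by (rule Re_cinner_le)
  also have "\<dots> = norm x * norm y"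
    using False by (simp add: norm_scaleC c_def norm_divide)
  finally show ?thesis .
qed

lemma bounded_linear_cinner_right: "bounded_linear (\<lambda>y. cinner x y)"
proof
  show "\<exists>K. \<forall>y. norm (cinner x y) \<le> norm y * K"
    by (rule exI[of _ "norm x"]) (metis norm_cinner_le mult.commute)
qed (simp_all add: cinner_add_right cinner_scaleR_right)

lemma bounded_linear_cinner_left: "bounded_linear (\<lambda>x. cinner x y)"
proof
  show "\<exists>K. \<forall>x. norm (cinner x y) \<le> norm x * K"
    by (rule exI[of _ "norm y"]) (simp add: norm_cinner_le)
qed (simp_all add: cinner_add_left cinner_scaleR_left)

lemma cinner_ext_right: "(\<And>x. cinner x y = cinner x z) \<Longrightarrow> y = z"
  by (metis cinner_diff_right cinner_self_eq_0 right_minus_eq)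

lemma bounded_linear_scaleC: "bounded_linear (\<lambda>x::'a::chilbert. a *\<^sub>C x)"
proof
  show "\<exists>K. \<forall>x::'a. norm (a *\<^sub>C x) \<le> norm x * K"
    by (rule exI[of _ "cmod a"]) (simp add: norm_scaleC mult.commute)
qed (simp_all add: scaleC_add_right scaleR_scaleC scaleC_scaleC mult.commute)

section \<open>Orthogonal projection and the Riesz representation\<close>

lemma csubspace_add: "csubspace K \<Longrightarrow> x \<in> K \<Longrightarrow> y \<in> K \<Longrightarrow> x + y \<in> K"
  and csubspace_scaleC: "csubspace K \<Longrightarrow> x \<in> K \<Longrightarrow> c *\<^sub>C x \<in> K"
  and csubspace_0: "csubspace K \<Longrightarrow> 0 \<in> K"
  by (simp_all add: csubspace_def)

lemma csubspace_imp_subspace: "csubspace K \<Longrightarrow> subspace K"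
  by (simp add: subspace_def csubspace_def scaleR_scaleC)

lemma csubspace_diff: "csubspace K \<Longrightarrow> x \<in> K \<Longrightarrow> y \<in> K \<Longrightarrow> x - y \<in> K"
  using csubspace_imp_subspace subspace_diff by blast

lemma Cauchy_if_power2_norm_diff_le:
  fixes k :: "nat \<Rightarrow> 'a::real_normed_vector"
  assumes bound: "\<And>m n. (norm (k m - k n))\<^sup>2 \<le> b m + b n" and "b \<longlonglongrightarrow> 0"
  shows "Cauchy k"
proof (rule metric_CauchyI)
  fix e :: real
  assume "0 < e"
  then have "\<forall>\<^sub>F n in sequentially. b n < e\<^sup>2 / 2"
    using \<open>b \<longlonglongrightarrow> 0\<close> \<open>0 < e\<close> by (intro order_tendstoD) auto
  then obtain M where M: "\<And>n. n \<ge> M \<Longrightarrow> b n < e\<^sup>2 / 2"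
    unfolding eventually_sequentially by blast
  have "dist (k m) (k n) < e" if "m \<ge> M" "n \<ge> M" for m n
  proof -
    have "(norm (k m - k n))\<^sup>2 < e\<^sup>2"
      using bound[of m n] M[OF that(1)] M[OF that(2)] by linarith
    then show ?thesis
      using \<open>0 < e\<close> by (simp add: dist_norm power_less_imp_less_base)
  qed
  then show "\<exists>M. \<forall>m\<ge>M. \<forall>n\<ge>M. dist (k m) (k n) < e"
    by blast
qed

lemma lim_const_over_Suc: "(\<lambda>n. c / (real n + 1)) \<longlonglongrightarrow> 0"
  using tendsto_mult_right_zero[OF LIMSEQ_inverse_real_of_nat, of c]
  by (simp add: inverse_eq_divide add.commute)

lemma csubspace_minimizing_seq_Cauchy:
  assumes K: "csubspace K" and k: "\<And>n. k n \<in> K"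
    and lower: "\<And>v. v \<in> K \<Longrightarrow> d \<le> (norm (x - v))\<^sup>2"
    and close: "\<And>n. (norm (x - k n))\<^sup>2 < d + 1 / (real n + 1)"
  shows "Cauchy k"
proof (rule Cauchy_if_power2_norm_diff_le[OF _ lim_const_over_Suc[of 2]])
  \<comment> \<open>the midpoint of \<open>k m\<close> and \<open>k n\<close> lies in \<open>K\<close>, so the parallelogram law bounds their distance\<close>
  fix m n
  define mid where "mid = (1/2::real) *\<^sub>R (k m + k n)"
  have "mid \<in> K"
    using K k by (simp add: mid_def csubspace_imp_subspace subspace_add subspace_scale)
  have "(x - k m) + (x - k n) = 2 *\<^sub>R (x - mid)"
    by (simp add: mid_def algebra_simps scaleR_2)
  then have "4 * d \<le> (norm ((x - k m) + (x - k n)))\<^sup>2"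
    using lower[OF \<open>mid \<in> K\<close>] by (simp add: power_mult_distrib)
  moreover have "k m - k n = (x - k n) - (x - k m)"
    by simp
  ultimately show "(norm (k m - k n))\<^sup>2 \<le> 2 / (real m + 1) + 2 / (real n + 1)"
    using parallelogram_law[of "x - k n" "x - k m"] close[of m] close[of n]
    by (simp add: add.commute)
qed

lemma closed_csubspace_nearest_point:
  assumes K: "csubspace K" "closed K"
  obtains k where "k \<in> K" "\<And>v. v \<in> K \<Longrightarrow> norm (x - k) \<le> norm (x - v)"
proof -
  define D where "D = (\<lambda>v. (norm (x - v))\<^sup>2) ` K"
  define d where "d = Inf D"
  have "D \<noteq> {}"
    using csubspace_0[OF K(1)] by (auto simp: D_def)
  have "bdd_below D"
    by (auto simp: D_def intro!: bdd_belowI[of _ 0])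
  have lower: "d \<le> (norm (x - v))\<^sup>2" if "v \<in> K" for v
    unfolding d_def using that \<open>bdd_below D\<close> by (auto simp: D_def intro!: cInf_lower)
  have "\<exists>v\<in>K. (norm (x - v))\<^sup>2 < d + 1 / (real n + 1)" for n
  proof -
    have "Inf D < d + 1 / (real n + 1)"
      by (simp add: d_def)
    then show ?thesis
      using cInf_less_iff[OF \<open>D \<noteq> {}\<close> \<open>bdd_below D\<close>] by (auto simp: D_def)
  qed
  then obtain k where k: "\<And>n. k n \<in> K" "\<And>n. (norm (x - k n))\<^sup>2 < d + 1 / (real n + 1)"
    by metis
  then have "Cauchy k"
    using csubspace_minimizing_seq_Cauchy[OF K(1)] lower by blast
  then obtain k0 where k0: "k \<longlonglongrightarrow> k0"
    using Cauchy_convergent_iff convergent_def by blast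
  have "k0 \<in> K"
    using closed_sequentially[OF K(2)] k(1) k0 by blast
  have "(\<lambda>n. d + 1 / (real n + 1)) \<longlonglongrightarrow> d + 0"
    by (intro tendsto_intros lim_const_over_Suc)
  moreover have "(\<lambda>n. (norm (x - k n))\<^sup>2) \<longlonglongrightarrow> (norm (x - k0))\<^sup>2"
    by (intro tendsto_intros k0)
  ultimately have "(norm (x - k0))\<^sup>2 \<le> d + 0"
    by (intro LIMSEQ_le[of "\<lambda>n. (norm (x - k n))\<^sup>2"]) (use k(2) less_imp_le in blast)+
  then have "norm (x - k0) \<le> norm (x - v)" if "v \<in> K" for v
    using lower[OF that] by (simp add: power2_le_imp_le)
  with \<open>k0 \<in> K\<close> show ?thesis
    using that by blast
qed

lemma nearest_point_orthogonal:
  assumes K: "csubspace K" and "k \<in> K"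
    and nearest: "\<And>v. v \<in> K \<Longrightarrow> norm (x - k) \<le> norm (x - v)"
    and "v \<in> K"
  shows "cinner v (x - k) = 0"
proof -
  \<comment> \<open>the real part vanishes because \<open>t \<mapsto> \<parallel>x - k - t v\<parallel>\<^sup>2\<close> is minimal at \<open>t = 0\<close>\<close>
  have Re_zero: "Re (cinner (x - k) w) = 0" if "w \<in> K" for w
  proof (cases "w = 0")
    case True
    then show ?thesis by simp
  next
    case False
    define r where "r = Re (cinner (x - k) w)"
    define N where "N = (norm w)\<^sup>2"
    have "N > 0"
      using False by (simp add: N_def)
    have "k + (r / N) *\<^sub>R w \<in> K"
      using K \<open>k \<in> K\<close> \<open>w \<in> K\<close> by (simp add: csubspace_imp_subspace subspace_add subspace_scale)
    from nearest[OF this] have "(norm (x - k))\<^sup>2 \<le> (norm ((x - k) - (r / N) *\<^sub>R w))\<^sup>2"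
      by (simp add: algebra_simps)
    also have "\<dots> = (norm (x - k))\<^sup>2 + (r / N)\<^sup>2 * N - 2 * (r / N) * r"
    proof -
      have "(norm ((r / N) *\<^sub>R w))\<^sup>2 = (r / N)\<^sup>2 * N"
        unfolding N_def norm_scaleR power_mult_distrib by (simp add: power2_abs flip: abs_divide)
      moreover have "Re (cinner (x - k) ((r / N) *\<^sub>R w)) = (r / N) * r"
        by (simp add: cinner_scaleR_right r_def)
      ultimately show ?thesis
        using power2_norm_diff[of "x - k" "(r / N) *\<^sub>R w"] by simp
    qed
    also have "\<dots> = (norm (x - k))\<^sup>2 - r\<^sup>2 / N"
      using \<open>N > 0\<close> by (simp add: power2_eq_square field_simps)
    finally have "r\<^sup>2 / N \<le> 0"
      by simp
    then show ?thesis
      using \<open>N > 0\<close> by (simp add: r_def divide_le_0_iff)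
  qed
  have "Im (cinner (x - k) v) = - Re (cinner (x - k) (\<i> *\<^sub>C v))"
    by (simp add: cinner_scaleC_right)
  then have "cinner (x - k) v = 0"
    using Re_zero[OF \<open>v \<in> K\<close>] Re_zero[OF csubspace_scaleC[OF K \<open>v \<in> K\<close>]]
    by (simp add: complex_eq_iff)
  then show ?thesis
    using cinner_conj[of v "x - k"] by simp
qed

lemma orthogonal_decomposition:
  assumes "csubspace K" "closed K"
  obtains k where "k \<in> K" "\<And>v. v \<in> K \<Longrightarrow> cinner v (x - k) = 0"
proof -
  obtain k where "k \<in> K" "\<And>v. v \<in> K \<Longrightarrow> norm (x - k) \<le> norm (x - v)"
    using closed_csubspace_nearest_point[OF assms, where x=x] by blast
  then show ?thesis
    using nearest_point_orthogonal[OF assms(1)] that by blast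
qed

lemma Riesz_representation:
  fixes f :: "'a::chilbert \<Rightarrow> complex"
  assumes "bounded_linear f" and hom: "\<And>c x. f (c *\<^sub>C x) = c * f x"
  obtains z where "\<And>x. f x = cinner z x"
proof (cases "\<forall>x. f x = 0")
  case True
  then show ?thesis
    using that[of 0] by simp
next
  case False
  then obtain x0 where "f x0 \<noteq> 0"
    by blast
  interpret f: bounded_linear f by fact
  define K where "K = {x. f x = 0}"
  have "csubspace K"
    by (auto simp: K_def csubspace_def f.add hom)
  moreover have "closed K"
    unfolding K_def by (intro closed_Collect_eq f.continuous_on continuous_on_id continuous_on_const)
  ultimately obtain k where "k \<in> K" and orth: "\<And>v. v \<in> K \<Longrightarrow> cinner v (x0 - k) = 0"
    using orthogonal_decomposition[where x=x0] by blast
  define u where "u = x0 - k"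
  have "f u \<noteq> 0"
    using \<open>k \<in> K\<close> \<open>f x0 \<noteq> 0\<close> by (simp add: u_def K_def f.diff)
  then have "cinner u u \<noteq> 0"
    by auto
  \<comment> \<open>\<open>f u \<cdot> x - f x \<cdot> u\<close> lies in the kernel, hence is orthogonal to \<open>u\<close>\<close>
  have "f x = cinner (cnj (f u / cinner u u) *\<^sub>C u) x" for x
  proof -
    have "cinner (f u *\<^sub>C x - f x *\<^sub>C u) u = 0"
      using orth[of "f u *\<^sub>C x - f x *\<^sub>C u"] by (simp add: K_def f.diff hom mult.commute u_def)
    then have "cinner u (f u *\<^sub>C x - f x *\<^sub>C u) = 0"
      using cinner_conj[of u] by simp
    then have "f u * cinner u x = f x * cinner u u"
      by (simp add: cinner_diff_right cinner_scaleC_right)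
    then show ?thesis
      using \<open>cinner u u \<noteq> 0\<close> by (simp add: cinner_scaleC_left field_simps)
  qed
  then show ?thesis
    by (rule that)
qed

section \<open>Bounded operators and adjoints\<close>

lemma cblinear_bounded_linear: "cblinear T \<Longrightarrow> bounded_linear T"
  and cblinear_scaleC: "cblinear T \<Longrightarrow> T (c *\<^sub>C x) = c *\<^sub>C T x"
  and cblinear_add: "cblinear T \<Longrightarrow> T (x + y) = T x + T y"
  and cblinear_diff: "cblinear T \<Longrightarrow> T (x - y) = T x - T y"
  and cblinear_zero: "cblinear T \<Longrightarrow> T 0 = 0"
  and cblinear_scaleR: "cblinear T \<Longrightarrow> T (r *\<^sub>R x) = r *\<^sub>R T x"
  by (simp_all add: cblinear_def linear_simps)

lemma cblinear_sum: "cblinear T \<Longrightarrow> T (\<Sum>i\<in>F. f i) = (\<Sum>i\<in>F. T (f i))"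
  by (induction F rule: infinite_finite_induct) (auto simp: cblinear_add cblinear_zero)

lemma cblinear_linear: "cblinear T \<Longrightarrow> linear T"
  by (simp add: cblinear_def bounded_linear.linear)

lemma cblinear_compose: "cblinear S \<Longrightarrow> cblinear T \<Longrightarrow> cblinear (\<lambda>x. S (T x))"
  unfolding cblinear_def using bounded_linear_compose[of S T] by auto

lemma cblinear_funpow: "cblinear T \<Longrightarrow> cblinear (T ^^ n)"
proof (induction n)
  case 0
  then show ?case
    by (simp add: cblinear_def bounded_linear_ident id_def)
next
  case (Suc n)
  then show ?case
    using cblinear_compose[of T "T ^^ n"] by (simp add: o_def)
qed

lemma funpow_cblinear_zero: "cblinear T \<Longrightarrow> (T ^^ n) 0 = 0"
  by (simp add: cblinear_funpow cblinear_zero)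

lemma cblinearI:
  assumes "\<And>x y. T (x + y) = T x + T y" "\<And>c x. T (c *\<^sub>C x) = c *\<^sub>C T x"
    and "\<And>x. norm (T x) \<le> norm x * K"
  shows "cblinear T"
  unfolding cblinear_def
proof
  show "bounded_linear T"
    by (rule bounded_linear_intro[where K=K]) (use assms in \<open>auto simp: scaleR_scaleC\<close>)
qed (use assms in auto)

lemma adjoint_exists:
  assumes "cblinear T"
  shows "\<exists>S. \<forall>x y. cinner (T x) y = cinner x (S y)"
proof -
  have "\<exists>z. \<forall>x. cinner y (T x) = cinner z x" for y
  proof -
    have "bounded_linear (\<lambda>x. cinner y (T x))"
      using bounded_linear_compose[OF bounded_linear_cinner_right cblinear_bounded_linear[OF assms]] .
    moreover have "cinner y (T (c *\<^sub>C x)) = c * cinner y (T x)" for c x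
      by (simp add: cblinear_scaleC[OF assms] cinner_scaleC_right)
    ultimately obtain z where "\<And>x. cinner y (T x) = cinner z x"
      by (rule Riesz_representation) blast
    then show ?thesis
      by blast
  qed
  then obtain S where S: "\<And>y x. cinner y (T x) = cinner (S y) x"
    by metis
  have "cinner (T x) y = cinner x (S y)" for x y
    using S[of y x] cinner_conj[of "T x" y] cinner_conj[of x "S y"] by simp
  then show ?thesis
    by blast
qed

lemma cinner_adj_right: "cblinear T \<Longrightarrow> cinner (T x) y = cinner x (adj T y)"
  using someI_ex[OF adjoint_exists] unfolding adj_def by blast

lemma cinner_adj_left: "cblinear T \<Longrightarrow> cinner (adj T y) x = cinner y (T x)"
  using cinner_adj_right[of T x y] cinner_conj[of "T x" y] cinner_conj[of x "adj T y"] by simp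

lemma adj_unique:
  assumes "\<And>x y. cinner (T x) y = cinner x (S y)"
  shows "adj T = S"
proof -
  have "\<forall>x y. cinner (T x) y = cinner x (adj T y)"
    unfolding adj_def by (rule someI[where x=S]) (use assms in blast)
  then have "adj T y = S y" for y
    using assms by (intro cinner_ext_right) simp
  then show ?thesis
    by auto
qed

lemma adj_adj: "cblinear T \<Longrightarrow> adj (adj T) = T"
  by (rule adj_unique) (simp add: cinner_adj_left)

lemma power2_norm_adj_le:
  "cblinear T \<Longrightarrow> (norm (adj T y))\<^sup>2 \<le> norm (T (adj T y)) * norm y"
proof -
  assume T: "cblinear T"
  have "(norm (adj T y))\<^sup>2 = Re (cinner (T (adj T y)) y)"
    by (simp add: cinner_adj_right[OF T] power2_norm_eq_cinner)
  also have "\<dots> \<le> cmod (cinner (T (adj T y)) y)"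
    by (rule complex_Re_le_cmod)
  also have "\<dots> \<le> norm (T (adj T y)) * norm y"
    by (rule norm_cinner_le)
  finally show ?thesis .
qed

lemma adj_cblinear:
  assumes T: "cblinear T"
  shows "cblinear (adj T)"
proof -
  obtain K where K: "\<And>x. norm (T x) \<le> norm x * K" "K > 0"
    using bounded_linear.pos_bounded[OF cblinear_bounded_linear[OF T]] by blast
  have "norm (adj T y) \<le> norm y * K" for y
  proof -
    have "norm (adj T y) * norm (adj T y) \<le> norm (T (adj T y)) * norm y"
      using power2_norm_adj_le[OF T, of y] by (simp add: power2_eq_square)
    also have "\<dots> \<le> norm (adj T y) * (norm y * K)"
      using mult_right_mono[OF K(1)[of "adj T y"], of "norm y"] by (simp add: mult_ac)
    finally have "norm (adj T y) * norm (adj T y) \<le> norm (adj T y) * (norm y * K)" .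
    then show ?thesis
      by (cases "adj T y = 0") (use K(2) in auto)
  qed
  then show ?thesis
  proof (rule cblinearI[rotated 2])
    show "adj T (x + y) = adj T x + adj T y" for x y
      by (rule cinner_ext_right) (simp add: cinner_adj_right[OF T, symmetric] cinner_add_right)
    show "adj T (c *\<^sub>C x) = c *\<^sub>C adj T x" for c x
      by (rule cinner_ext_right) (simp add: cinner_adj_right[OF T, symmetric] cinner_scaleC_right)
  qed
qed

lemma norm_adj_le:
  assumes "cblinear T" and "\<And>x. norm (T x) \<le> norm x"
  shows "norm (adj T y) \<le> norm y"
proof -
  have "norm (adj T y) * norm (adj T y) \<le> norm (T (adj T y)) * norm y"
    using power2_norm_adj_le[OF assms(1), of y] by (simp add: power2_eq_square)
  also have "\<dots> \<le> norm (adj T y) * norm y"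
    using assms(2) by (simp add: mult_right_mono)
  finally have "norm (adj T y) * norm (adj T y) \<le> norm (adj T y) * norm y" .
  then show ?thesis
    by (cases "adj T y = 0") auto
qed

section \<open>The binomial series of sqrt(1 - t)\<close>

definition sqrt_coeff :: "nat \<Rightarrow> real" where
  "sqrt_coeff n = (-1) ^ n * ((1/2) gchoose n)"

lemma sqrt_coeff_0 [simp]: "sqrt_coeff 0 = 1"
  by (simp add: sqrt_coeff_def)

lemma sqrt_coeff_Suc: "sqrt_coeff (Suc n) = sqrt_coeff n * ((real n - 1/2) / (real n + 1))"
proof -
  have "(1/2::real) * ((1/2) gchoose n) = real n * ((1/2) gchoose n) + real (Suc n) * ((1/2) gchoose Suc n)"
    by (rule gbinomial_mult_1)
  then have "((1/2::real) gchoose Suc n) = - ((1/2) gchoose n) * ((real n - 1/2) / (real n + 1))"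
    by (simp add: field_simps)
  then show ?thesis
    by (simp add: sqrt_coeff_def)
qed

lemma sqrt_coeff_nonpos: "n \<ge> 1 \<Longrightarrow> sqrt_coeff n \<le> 0"
proof (induction n)
  case 0
  then show ?case by simp
next
  case (Suc n)
  show ?case
  proof (cases "n = 0")
    case True
    then show ?thesis by (simp add: sqrt_coeff_Suc)
  next
    case False
    then have "sqrt_coeff n \<le> 0" "(real n - 1/2) / (real n + 1) \<ge> 0"
      using Suc by simp_all
    then show ?thesis
      unfolding sqrt_coeff_Suc by (rule mult_nonpos_nonneg)
  qed
qed

lemma sqrt_coeff_partial_sum: "(\<Sum>k\<le>n. sqrt_coeff k) = - 2 * (real n + 1) * sqrt_coeff (Suc n)"
proof (induction n)
  case 0
  then show ?case by (simp add: sqrt_coeff_Suc)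
next
  case (Suc n)
  then have "(\<Sum>k\<le>Suc n. sqrt_coeff k) = - 2 * (real n + 1) * sqrt_coeff (Suc n) + sqrt_coeff (Suc n)"
    by simp
  also have "\<dots> = - 2 * (real (Suc n) + 1) * sqrt_coeff (Suc (Suc n))"
    by (simp add: sqrt_coeff_Suc[of "Suc n"] field_simps)
  finally show ?case .
qed

lemma sqrt_coeff_partial_sum_nonneg: "(\<Sum>k\<le>n. sqrt_coeff k) \<ge> 0"
  using sqrt_coeff_nonpos[of "Suc n"] by (simp add: sqrt_coeff_partial_sum mult_nonpos_nonpos)

lemma sqrt_coeff_abs_partial_sum: "(\<Sum>k\<le>n. \<bar>sqrt_coeff k\<bar>) = 2 - (\<Sum>k\<le>n. sqrt_coeff k)"
  by (induction n) (simp_all add: sqrt_coeff_nonpos)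

lemma sqrt_coeff_abs_summable: "summable (\<lambda>n. \<bar>sqrt_coeff n\<bar>)"
  by (rule bounded_imp_summable[where B=2]) (use sqrt_coeff_abs_partial_sum sqrt_coeff_partial_sum_nonneg in auto)

lemma sqrt_coeff_summable: "summable sqrt_coeff"
  using sqrt_coeff_abs_summable summable_rabs_cancel by blast

lemma sqrt_coeff_suminf_nonneg: "suminf sqrt_coeff \<ge> 0"
  by (rule LIMSEQ_le_const[OF summable_LIMSEQ'[OF sqrt_coeff_summable]]) (use sqrt_coeff_partial_sum_nonneg in auto)

lemma sqrt_coeff_convolution: "(\<Sum>k\<le>n. sqrt_coeff k * sqrt_coeff (n - k)) = (if n = 0 then 1 else if n = 1 then -1 else 0)"
proof -
  have "(\<Sum>k\<le>n. sqrt_coeff k * sqrt_coeff (n - k)) = (\<Sum>k\<le>n. (-1)^n * (((1/2::real) gchoose k) * ((1/2) gchoose (n - k))))"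
    by (intro sum.cong refl) (simp add: sqrt_coeff_def power_add[symmetric])
  also have "\<dots> = (-1)^n * (\<Sum>k=0..n. ((1/2::real) gchoose k) * ((1/2) gchoose (n - k)))"
    by (simp add: sum_distrib_left atMost_atLeast0)
  also have "\<dots> = (-1)^n * ((1::real) gchoose n)"
    by (subst gbinomial_Vandermonde) simp
  also have "\<dots> = (if n = 0 then 1 else if n = 1 then -1 else 0)"
  proof -
    have "((1::real) gchoose n) = real (1 choose n)" using binomial_gbinomial[of 1 n, where 'a=real] by simp
    then show ?thesis by (cases n) (auto simp: binomial_eq_0)
  qed
  finally show ?thesis .
qed

lemma Cauchy_product_sums_dominated:
  fixes g :: "nat \<Rightarrow> nat \<Rightarrow> 'a::real_normed_vector"
  assumes "\<And>i. \<alpha> i \<ge> 0" "\<And>j. \<beta> j \<ge> 0" "summable \<alpha>" "summable \<beta>"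
    and dominated: "\<And>i j. norm (g i j) \<le> \<alpha> i * \<beta> j"
    and square_sums: "(\<lambda>n. \<Sum>i<n. \<Sum>j<n. g i j) \<longlonglongrightarrow> L"
  shows "(\<lambda>k. \<Sum>i\<le>k. g i (k - i)) sums L"
proof -
  let ?square = "\<lambda>n::nat. {..<n} \<times> {..<n}" and ?triangle = "\<lambda>n::nat. {(i, j). i + j < n}"
  let ?f = "\<lambda>(i, j). \<alpha> i * \<beta> j"
  define P where "P n = (\<Sum>i<n. \<alpha> i) * (\<Sum>j<n. \<beta> j)" for n
  have "P \<longlonglongrightarrow> suminf \<alpha> * suminf \<beta>"
    unfolding P_def using assms(3,4) by (intro tendsto_mult summable_LIMSEQ)
  moreover have "(\<lambda>n. P (n div 2)) \<longlonglongrightarrow> suminf \<alpha> * suminf \<beta>"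
    using filterlim_compose[OF calculation filterlim_at_top_div_const_nat[of 2]] by simp
  ultimately have P_diff: "(\<lambda>n. P n - P (n div 2)) \<longlonglongrightarrow> 0"
    using tendsto_diff by fastforce
  \<comment> \<open>the triangle \<open>i + j < n\<close> contains the square of side \<open>n div 2\<close>\<close>
  have "norm (sum (\<lambda>(i, j). g i j) (?square n - ?triangle n)) \<le> P n - P (n div 2)" for n
  proof -
    have "norm (sum (\<lambda>(i, j). g i j) (?square n - ?triangle n)) \<le> sum ?f (?square n - ?triangle n)"
      by (rule order_trans[OF norm_sum sum_mono]) (auto simp: dominated)
    also have "\<dots> \<le> sum ?f (?square n - ?square (n div 2))"
      using assms(1,2) by (intro sum_mono2) (auto intro: mult_nonneg_nonneg)
    also have "\<dots> = sum ?f (?square n) - sum ?f (?square (n div 2))"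
      by (intro sum_diff) auto
    also have "\<dots> = P n - P (n div 2)"
      by (simp add: P_def sum_product sum.cartesian_product)
    finally show ?thesis .
  qed
  then have "(\<lambda>n. sum (\<lambda>(i, j). g i j) (?square n) - sum (\<lambda>(i, j). g i j) (?triangle n)) \<longlonglongrightarrow> 0"
    by (intro Lim_null_comparison[OF _ P_diff]) (simp add: sum_diff subset_eq)
  moreover have "(\<lambda>n. sum (\<lambda>(i, j). g i j) (?square n)) \<longlonglongrightarrow> L"
    using square_sums by (simp add: sum.cartesian_product)
  ultimately have "(\<lambda>n. sum (\<lambda>(i, j). g i j) (?triangle n)) \<longlonglongrightarrow> L"
    by (rule Lim_transform2[rotated])
  then show ?thesis
    by (simp only: sums_def sum.triangle_reindex)
qed

section \<open>Square roots of positive operators\<close>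

definition selfadjoint :: "('a::chilbert \<Rightarrow> 'a) \<Rightarrow> bool" where
  "selfadjoint T \<longleftrightarrow> (\<forall>x y. cinner (T x) y = cinner x (T y))"

lemma selfadjointD: "selfadjoint T \<Longrightarrow> cinner (T x) y = cinner x (T y)"
  by (simp add: selfadjoint_def)

lemma positive_op_cblinear: "positive_op P \<Longrightarrow> cblinear P"
  by (simp add: positive_op_def)

lemma positive_op_Re_nonneg: "positive_op P \<Longrightarrow> Re (cinner (P x) x) \<ge> 0"
  by (simp add: positive_op_def)

lemma positive_op_selfadjoint:
  assumes P: "positive_op P"
  shows "selfadjoint P"
  unfolding selfadjoint_def
proof (intro allI)
  fix x y
  have lin: "cblinear P"
    using P by (rule positive_op_cblinear)
  have Im_zero: "Im (cinner (P z) z) = 0" for z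
    using P by (simp add: positive_op_def)
  \<comment> \<open>polarization: the quadratic form is real along \<open>x + y\<close> and \<open>x + \<i> y\<close>\<close>
  have "cinner (P (x + y)) (x + y) = cinner (P x) x + cinner (P x) y + cinner (P y) x + cinner (P y) y"
    by (simp add: cblinear_add[OF lin] cinner_add_left cinner_add_right)
  then have "Im (cinner (P x) y) + Im (cinner (P y) x) = 0"
    using Im_zero[of "x + y"] Im_zero[of x] Im_zero[of y] by simp
  moreover have "cinner (P (x + \<i> *\<^sub>C y)) (x + \<i> *\<^sub>C y) =
      cinner (P x) x + \<i> * cinner (P x) y - \<i> * cinner (P y) x + cinner (P y) y"
    by (simp add: cblinear_add[OF lin] cblinear_scaleC[OF lin] cinner_add_left cinner_add_right
        cinner_scaleC_left cinner_scaleC_right algebra_simps)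
  then have "Re (cinner (P x) y) - Re (cinner (P y) x) = 0"
    using Im_zero[of "x + \<i> *\<^sub>C y"] Im_zero[of x] Im_zero[of y] by simp
  ultimately have "cinner (P x) y = cnj (cinner (P y) x)"
    by (simp add: complex_eq_iff)
  then show "cinner (P x) y = cinner x (P y)"
    using cinner_conj[of x "P y"] by simp
qed

lemma positive_op_form_eq_0_imp_eq_0:
  assumes P: "positive_op P" and form_zero: "Re (cinner (P y) y) = 0"
  shows "P y = 0"
proof -
  have lin: "cblinear P"
    using P by (rule positive_op_cblinear)
  define v where "v = P y"
  define a where "a = (norm v)\<^sup>2"
  define c where "c = Re (cinner (P v) v)"
  have "c \<ge> 0"
    using P by (simp add: positive_op_def c_def)
  \<comment> \<open>positivity of the form at \<open>y + t v\<close> gives \<open>0 \<le> 2 t a + t\<^sup>2 c\<close> for all real \<open>t\<close>, forcing \<open>a = 0\<close>\<close>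
  have quadratic: "0 \<le> 2 * t * a + t\<^sup>2 * c" for t
  proof -
    have "cinner (P (y + t *\<^sub>R v)) (y + t *\<^sub>R v) =
        cinner (P y) y + t *\<^sub>R cinner (P y) v + t *\<^sub>R cinner (P v) y + (t * t) *\<^sub>R cinner (P v) v"
      by (simp add: cblinear_add[OF lin] cblinear_scaleR[OF lin] cinner_add_left cinner_add_right
          cinner_scaleR_left cinner_scaleR_right algebra_simps)
    moreover have "cinner (P v) y = cinner v v"
      using selfadjointD[OF positive_op_selfadjoint[OF P], of v y] by (simp add: v_def)
    moreover have "Re (cinner v v) = a"
      by (simp add: a_def power2_norm_eq_cinner)
    ultimately show ?thesis
      using positive_op_Re_nonneg[OF P, of "y + t *\<^sub>R v"] form_zero
      by (simp add: v_def c_def power2_eq_square algebra_simps)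
  qed
  define t where "t = - a / (c + 1)"
  have "0 \<le> (c + 1)\<^sup>2 * (2 * t * a + t\<^sup>2 * c)"
    using quadratic[of t] by simp
  also have "\<dots> = 2 * a * (c + 1) * (t * (c + 1)) + (t * (c + 1))\<^sup>2 * c"
    by (simp add: power2_eq_square algebra_simps)
  also have "t * (c + 1) = - a"
    using \<open>c \<ge> 0\<close> by (simp add: t_def)
  finally have "a\<^sup>2 * (c + 2) \<le> 0"
    by (simp add: power2_eq_square algebra_simps)
  then have "a = 0"
    using \<open>c \<ge> 0\<close> by (simp add: mult_le_0_iff)
  then show ?thesis
    by (simp add: a_def v_def)
qed

text \<open>Defect spaces are defined through \<open>op_sqrt\<close>, a definite description, so identifying
  them requires both a positive square root of \<open>I - C\<close> (the binomial series \<open>\<Sum> c\<^sub>n C\<^sup>n\<close>)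
  and its uniqueness.\<close>

locale selfadjoint_contraction =
  fixes C :: "'a::chilbert \<Rightarrow> 'a"
  assumes cblinear: "cblinear C"
    and selfadjoint: "selfadjoint C"
    and norm_le: "\<And>x. norm (C x) \<le> norm x"
begin

lemma powers_norm_le: "norm ((C ^^ n) x) \<le> norm x"
  by (induction n) (auto intro: order_trans[OF norm_le])

lemma powers_cblinear: "cblinear (C ^^ n)"
  by (rule cblinear_funpow[OF cblinear])

lemma powers_selfadjoint: "cinner ((C ^^ n) x) y = cinner x ((C ^^ n) y)"
proof (induction n arbitrary: x y)
  case 0
  then show ?case by simp
next
  case (Suc n)
  have "cinner ((C ^^ Suc n) x) y = cinner ((C ^^ n) x) (C y)"
    using selfadjointD[OF selfadjoint] by simp
  also have "\<dots> = cinner x ((C ^^ n) (C y))"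
    by (rule Suc)
  finally show ?case
    by (simp add: funpow_swap1)
qed

lemma powers_form_real: "Im (cinner ((C ^^ n) x) x) = 0"
  using powers_selfadjoint[of n x x] cinner_conj[of x "(C ^^ n) x"] by (simp add: complex_eq_iff)

lemma powers_form_le: "cmod (cinner ((C ^^ n) x) x) \<le> (norm x)\<^sup>2"
  using order_trans[OF norm_cinner_le mult_right_mono[OF powers_norm_le]]
  by (simp add: power2_eq_square)

lemma series_term_norm_le: "norm (sqrt_coeff n *\<^sub>R (C ^^ n) x) \<le> \<bar>sqrt_coeff n\<bar> * norm x"
  using powers_norm_le[of n x] by (simp add: mult_left_mono)

lemma series_norm_summable: "summable (\<lambda>n. norm (sqrt_coeff n *\<^sub>R (C ^^ n) x))"
  by (rule summable_comparison_test'[where g="\<lambda>n. \<bar>sqrt_coeff n\<bar> * norm x" and N=0])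
    (use series_term_norm_le summable_mult2[OF sqrt_coeff_abs_summable] in auto)

lemma series_summable: "summable (\<lambda>n. sqrt_coeff n *\<^sub>R (C ^^ n) x)"
  by (rule summable_norm_cancel[OF series_norm_summable])

definition root :: "'a \<Rightarrow> 'a" where
  "root x = (\<Sum>n. sqrt_coeff n *\<^sub>R (C ^^ n) x)"

definition root_partial :: "nat \<Rightarrow> 'a \<Rightarrow> 'a" where
  "root_partial n x = (\<Sum>j<n. sqrt_coeff j *\<^sub>R (C ^^ j) x)"

lemma root_norm_le: "norm (root x) \<le> (\<Sum>n. \<bar>sqrt_coeff n\<bar>) * norm x"
proof -
  have "norm (root x) \<le> (\<Sum>n. norm (sqrt_coeff n *\<^sub>R (C ^^ n) x))"
    unfolding root_def by (rule summable_norm[OF series_norm_summable])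
  also have "\<dots> \<le> (\<Sum>n. \<bar>sqrt_coeff n\<bar> * norm x)"
    by (rule suminf_le[OF series_term_norm_le series_norm_summable
          summable_mult2[OF sqrt_coeff_abs_summable]])
  also have "\<dots> = (\<Sum>n. \<bar>sqrt_coeff n\<bar>) * norm x"
    by (rule suminf_mult2[OF sqrt_coeff_abs_summable, symmetric])
  finally show ?thesis .
qed

lemma root_partial_norm_le: "norm (root_partial n x) \<le> (\<Sum>n. \<bar>sqrt_coeff n\<bar>) * norm x"
proof -
  have "norm (root_partial n x) \<le> (\<Sum>j<n. norm (sqrt_coeff j *\<^sub>R (C ^^ j) x))"
    unfolding root_partial_def by (rule norm_sum)
  also have "\<dots> \<le> (\<Sum>j<n. \<bar>sqrt_coeff j\<bar>) * norm x"
    using series_term_norm_le by (simp add: sum_distrib_right sum_mono)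
  also have "\<dots> \<le> (\<Sum>n. \<bar>sqrt_coeff n\<bar>) * norm x"
    by (intro mult_right_mono sum_le_suminf[OF sqrt_coeff_abs_summable]) auto
  finally show ?thesis .
qed

lemma root_partial_diff: "root_partial n x - root_partial n y = root_partial n (x - y)"
  unfolding root_partial_def
  by (simp add: cblinear_diff[OF powers_cblinear] scaleR_diff_right sum_subtractf)

lemma root_partial_tendsto: "(\<lambda>n. root_partial n x) \<longlonglongrightarrow> root x"
  unfolding root_partial_def root_def by (rule summable_LIMSEQ[OF series_summable])

lemma root_cblinear: "cblinear root"
proof (rule cblinearI)
  show "root (x + y) = root x + root y" for x y
    unfolding root_def
    by (simp add: suminf_add[OF series_summable series_summable] cblinear_add[OF powers_cblinear]
        scaleR_add_right)
  show "root (c *\<^sub>C x) = c *\<^sub>C root x" for c x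
  proof -
    have "c *\<^sub>C root x = (\<Sum>n. c *\<^sub>C (sqrt_coeff n *\<^sub>R (C ^^ n) x))"
      unfolding root_def by (rule bounded_linear.suminf[OF bounded_linear_scaleC series_summable])
    then show ?thesis
      by (simp add: root_def cblinear_scaleC[OF powers_cblinear] scaleR_scaleC scaleC_scaleC mult.commute)
  qed
  show "norm (root x) \<le> norm x * (\<Sum>n. \<bar>sqrt_coeff n\<bar>)" for x
    using root_norm_le by (simp add: mult.commute)
qed

lemma commute_root:
  assumes R: "cblinear R" and commute: "\<And>x. R (C x) = C (R x)"
  shows "R (root x) = root (R x)"
proof -
  have "R ((C ^^ n) y) = (C ^^ n) (R y)" for n y
    by (induction n) (simp_all add: commute)
  moreover have "R (root x) = (\<Sum>n. R (sqrt_coeff n *\<^sub>R (C ^^ n) x))"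
    unfolding root_def by (rule bounded_linear.suminf[OF cblinear_bounded_linear[OF R] series_summable])
  ultimately show ?thesis
    by (simp add: root_def cblinear_scaleR[OF R])
qed

lemma cinner_root_left: "cinner (root x) y = (\<Sum>n. sqrt_coeff n *\<^sub>R cinner ((C ^^ n) x) y)"
proof -
  have "cinner (root x) y = (\<Sum>n. cinner (sqrt_coeff n *\<^sub>R (C ^^ n) x) y)"
    unfolding root_def by (rule bounded_linear.suminf[OF bounded_linear_cinner_left series_summable])
  then show ?thesis
    by (simp add: cinner_scaleR_left)
qed

lemma cinner_root_right: "cinner x (root y) = (\<Sum>n. sqrt_coeff n *\<^sub>R cinner x ((C ^^ n) y))"
proof -
  have "cinner x (root y) = (\<Sum>n. cinner x (sqrt_coeff n *\<^sub>R (C ^^ n) y))"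
    unfolding root_def by (rule bounded_linear.suminf[OF bounded_linear_cinner_right series_summable])
  then show ?thesis
    by (simp add: cinner_scaleR_right)
qed

lemma root_selfadjoint: "selfadjoint root"
  unfolding selfadjoint_def by (simp add: cinner_root_left cinner_root_right powers_selfadjoint)

lemma root_positive: "positive_op root"
  unfolding positive_op_def
proof (intro conjI allI root_cblinear)
  fix x
  define z where "z n = cinner ((C ^^ n) x) x" for n
  have summable: "summable (\<lambda>n. sqrt_coeff n *\<^sub>R z n)"
    by (rule summable_comparison_test'[where g="\<lambda>n. \<bar>sqrt_coeff n\<bar> * (norm x)\<^sup>2" and N=0])
      (use powers_form_le summable_mult2[OF sqrt_coeff_abs_summable] in \<open>auto simp: z_def mult_left_mono\<close>)
  have root_form: "cinner (root x) x = (\<Sum>n. sqrt_coeff n *\<^sub>R z n)"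
    unfolding z_def by (rule cinner_root_left)
  show "Im (cinner (root x) x) = 0"
    unfolding root_form Im_suminf[OF summable] by (simp add: z_def powers_form_real)
  \<comment> \<open>all coefficients but the first are \<open>\<le> 0\<close> and \<open>Re (z n) \<le> \<parallel>x\<parallel>\<^sup>2 = z 0\<close>\<close>
  have "(\<Sum>n. sqrt_coeff n * (norm x)\<^sup>2) \<le> (\<Sum>n. sqrt_coeff n * Re (z n))"
  proof (rule suminf_le)
    show "sqrt_coeff n * (norm x)\<^sup>2 \<le> sqrt_coeff n * Re (z n)" for n
    proof (cases "n = 0")
      case True
      then show ?thesis
        by (simp add: z_def power2_norm_eq_cinner)
    next
      case False
      then have "sqrt_coeff n \<le> 0"
        using sqrt_coeff_nonpos by simp
      moreover have "Re (z n) \<le> (norm x)\<^sup>2"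
        using powers_form_le[of n x] complex_Re_le_cmod[of "z n"] by (simp add: z_def)
      ultimately show ?thesis
        using mult_left_mono_neg by blast
    qed
    show "summable (\<lambda>n. sqrt_coeff n * (norm x)\<^sup>2)"
      by (rule summable_mult2[OF sqrt_coeff_summable])
    show "summable (\<lambda>n. sqrt_coeff n * Re (z n))"
      using bounded_linear.summable[OF bounded_linear_Re summable] by simp
  qed
  moreover have "(\<Sum>n. sqrt_coeff n * (norm x)\<^sup>2) = suminf sqrt_coeff * (norm x)\<^sup>2"
    by (rule suminf_mult2[OF sqrt_coeff_summable, symmetric])
  moreover have "Re (cinner (root x) x) = (\<Sum>n. sqrt_coeff n * Re (z n))"
    using Re_suminf[OF summable] by (simp add: root_form)
  moreover have "suminf sqrt_coeff * (norm x)\<^sup>2 \<ge> 0"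
    using sqrt_coeff_suminf_nonneg by simp
  ultimately show "Re (cinner (root x) x) \<ge> 0"
    by linarith
qed

lemma root_partial_square_tendsto:
  "(\<lambda>n. root_partial n (root_partial n x)) \<longlonglongrightarrow> root (root x)"
proof -
  have "(\<lambda>n. root_partial n (root_partial n x) - root_partial n (root x)) \<longlonglongrightarrow> 0"
  proof (rule Lim_null_comparison)
    show "\<forall>\<^sub>F n in sequentially. norm (root_partial n (root_partial n x) - root_partial n (root x))
        \<le> (\<Sum>n. \<bar>sqrt_coeff n\<bar>) * norm (root_partial n x - root x)"
      by (simp add: root_partial_diff root_partial_norm_le)
    have "(\<lambda>n. norm (root_partial n x - root x)) \<longlonglongrightarrow> 0"
      using root_partial_tendsto[of x] by (simp add: LIM_zero tendsto_norm_zero)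
    then show "(\<lambda>n. (\<Sum>n. \<bar>sqrt_coeff n\<bar>) * norm (root_partial n x - root x)) \<longlonglongrightarrow> 0"
      by (rule tendsto_mult_right_zero)
  qed
  then have "(\<lambda>n. (root_partial n (root_partial n x) - root_partial n (root x)) + root_partial n (root x))
      \<longlonglongrightarrow> 0 + root (root x)"
    by (intro tendsto_add root_partial_tendsto)
  then show ?thesis
    by simp
qed

lemma root_root: "root (root x) = x - C x"
proof -
  define g where "g i j = sqrt_coeff i *\<^sub>R (C ^^ i) (sqrt_coeff j *\<^sub>R (C ^^ j) x)" for i j
  have "norm (g i j) \<le> \<bar>sqrt_coeff i\<bar> * (\<bar>sqrt_coeff j\<bar> * norm x)" for i j
    unfolding g_def
    by (rule order_trans[OF series_term_norm_le mult_left_mono[OF series_term_norm_le]]) simp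
  moreover have "(\<lambda>n. \<Sum>i<n. \<Sum>j<n. g i j) \<longlonglongrightarrow> root (root x)"
    using root_partial_square_tendsto[of x]
    by (simp add: g_def root_partial_def cblinear_sum[OF powers_cblinear]
        cblinear_scaleR[OF powers_cblinear] scaleR_sum_right)
  ultimately have "(\<lambda>k. \<Sum>i\<le>k. g i (k - i)) sums root (root x)"
    by (intro Cauchy_product_sums_dominated[where \<alpha>="\<lambda>i. \<bar>sqrt_coeff i\<bar>"
          and \<beta>="\<lambda>j. \<bar>sqrt_coeff j\<bar> * norm x"] summable_mult2 sqrt_coeff_abs_summable) auto
  moreover have "(\<Sum>i\<le>k. g i (k - i)) = (\<Sum>i\<le>k. sqrt_coeff i * sqrt_coeff (k - i)) *\<^sub>R (C ^^ k) x" for k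
  proof -
    have "g i (k - i) = (sqrt_coeff i * sqrt_coeff (k - i)) *\<^sub>R (C ^^ k) x" if "i \<le> k" for i
      using that funpow_add[of i "k - i" C]
      by (simp add: g_def cblinear_scaleR[OF powers_cblinear])
    then show ?thesis
      by (simp add: scaleR_sum_left)
  qed
  ultimately have "(\<lambda>k. (if k = 0 then 1 else if k = 1 then -1 else 0) *\<^sub>R (C ^^ k) x) sums root (root x)"
    by (simp add: sqrt_coeff_convolution)
  moreover have "(\<lambda>k. (if k = 0 then 1 else if k = 1 then -1 else 0) *\<^sub>R (C ^^ k) x) sums (x - C x)"
    using sums_finite[of "{0, 1}" "\<lambda>k. (if k = 0 then 1 else if k = 1 then -1 else 0) *\<^sub>R (C ^^ k) x"]
    by simp
  ultimately show ?thesis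
    by (rule sums_unique2)
qed

lemma positive_root_unique:
  assumes R: "positive_op R" and RR: "\<And>x. R (R x) = x - C x"
  shows "R = root"
proof
  fix x
  have lin: "cblinear R"
    using R by (rule positive_op_cblinear)
  have "R (C x) = C (R x)" for x
    using RR[of "R x"] RR[of x] by (simp add: cblinear_diff[OF lin])
  then have commute: "R (root x) = root (R x)" for x
    using commute_root[OF lin] by blast
  \<comment> \<open>for \<open>y = root x - R x\<close>, \<open>root y + R y = 0\<close>, and both forms are nonnegative\<close>
  define y where "y = root x - R x"
  have "root y + R y = 0"
    unfolding y_def by (simp add: cblinear_diff[OF lin] cblinear_diff[OF root_cblinear] root_root RR commute)
  then have "Re (cinner (root y) y + cinner (R y) y) = 0"
    using cinner_add_left[of "root y" "R y" y] by simp
  then have "Re (cinner (root y) y) + Re (cinner (R y) y) = 0"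
    by (simp only: plus_complex.sel)
  then have "Re (cinner (root y) y) = 0" "Re (cinner (R y) y) = 0"
    using positive_op_Re_nonneg[OF root_positive, of y] positive_op_Re_nonneg[OF R, of y] by linarith+
  then have "root y = 0" "R y = 0"
    using positive_op_form_eq_0_imp_eq_0[OF root_positive] positive_op_form_eq_0_imp_eq_0[OF R] by auto
  then have "cinner x (root y) - cinner x (R y) = 0"
    by simp
  then have "cinner y y = 0"
    using selfadjointD[OF root_selfadjoint] selfadjointD[OF positive_op_selfadjoint[OF R]]
    by (simp add: y_def cinner_diff_left)
  then show "R x = root x"
    by (simp add: y_def)
qed

lemma op_sqrt_eq_root: "op_sqrt (\<lambda>x. x - C x) = root"
  unfolding op_sqrt_def
proof (rule the_equality)
  show "positive_op root \<and> root \<circ> root = (\<lambda>x. x - C x)"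
    using root_positive root_root by auto
  show "R = root" if "positive_op R \<and> R \<circ> R = (\<lambda>x. x - C x)" for R
    using that positive_root_unique by (metis comp_apply)
qed

lemma op_sqrt_positive: "positive_op (op_sqrt (\<lambda>x. x - C x))"
  and op_sqrt_square: "op_sqrt (\<lambda>x. x - C x) (op_sqrt (\<lambda>x. x - C x) x) = x - C x"
  and op_sqrt_selfadjoint: "selfadjoint (op_sqrt (\<lambda>x. x - C x))"
  by (simp_all add: op_sqrt_eq_root root_positive root_root root_selfadjoint)

end

section \<open>Finite-dimensional subspaces\<close>

lemma cspan_finite_iff:
  assumes "finite B"
  shows "x \<in> cspan B \<longleftrightarrow> (\<exists>c. x = (\<Sum>b\<in>B. c b *\<^sub>C b))"
proof
  assume "x \<in> cspan B"
  then obtain F c where F: "x = (\<Sum>b\<in>F. c b *\<^sub>C b)" "finite F" "F \<subseteq> B"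
    unfolding cspan_def by blast
  have "(\<Sum>b\<in>B. (if b \<in> F then c b else 0) *\<^sub>C b) = (\<Sum>b\<in>F. c b *\<^sub>C b)"
    using F assms by (intro sum.mono_neutral_cong_right) auto
  with F show "\<exists>c. x = (\<Sum>b\<in>B. c b *\<^sub>C b)"
    by metis
next
  assume "\<exists>c. x = (\<Sum>b\<in>B. c b *\<^sub>C b)"
  then show "x \<in> cspan B"
    using assms unfolding cspan_def by blast
qed

lemma csubspace_cspan:
  assumes "finite B"
  shows "csubspace (cspan B)"
proof -
  have "x + y \<in> cspan B" if x: "x \<in> cspan B" and y: "y \<in> cspan B" for x y
  proof -
    obtain c d where "x = (\<Sum>b\<in>B. c b *\<^sub>C b)" "y = (\<Sum>b\<in>B. d b *\<^sub>C b)"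
      using x y cspan_finite_iff[OF assms] by blast
    then have "x + y = (\<Sum>b\<in>B. (c b + d b) *\<^sub>C b)"
      by (simp add: scaleC_add_left sum.distrib)
    then show ?thesis
      unfolding cspan_finite_iff[OF assms] by (rule exI[where x="\<lambda>b. c b + d b"])
  qed
  moreover have "a *\<^sub>C x \<in> cspan B" if x: "x \<in> cspan B" for a x
  proof -
    obtain c where "x = (\<Sum>b\<in>B. c b *\<^sub>C b)"
      using x cspan_finite_iff[OF assms] by blast
    then have "a *\<^sub>C x = (\<Sum>b\<in>B. (a * c b) *\<^sub>C b)"
      by (simp add: scaleC_sum_right scaleC_scaleC)
    then show ?thesis
      unfolding cspan_finite_iff[OF assms] by (rule exI[where x="\<lambda>b. a * c b"])
  qed
  moreover have "0 \<in> cspan B"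
    unfolding cspan_finite_iff[OF assms] by (rule exI[where x="\<lambda>_. 0"]) simp
  ultimately show ?thesis
    by (simp add: csubspace_def)
qed

lemma cspan_subset_span:
  assumes "finite B"
  shows "cspan B \<subseteq> span (B \<union> (\<lambda>b. \<i> *\<^sub>C b) ` B)"
proof
  fix x
  assume "x \<in> cspan B"
  then obtain c where x: "x = (\<Sum>b\<in>B. c b *\<^sub>C b)"
    using cspan_finite_iff[OF assms] by blast
  have "c b *\<^sub>C b = Re (c b) *\<^sub>R b + Im (c b) *\<^sub>R (\<i> *\<^sub>C b)" for b
    using scaleC_add_left[of "complex_of_real (Re (c b))" "complex_of_real (Im (c b)) * \<i>" b]
    by (simp add: scaleR_scaleC scaleC_scaleC complex_eq[of "c b", symmetric] mult.commute)
  then have "x = (\<Sum>b\<in>B. Re (c b) *\<^sub>R b + Im (c b) *\<^sub>R (\<i> *\<^sub>C b))"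
    by (simp add: x)
  also have "\<dots> \<in> span (B \<union> (\<lambda>b. \<i> *\<^sub>C b) ` B)"
    by (intro span_sum span_add span_scale span_base) auto
  finally show "x \<in> span (B \<union> (\<lambda>b. \<i> *\<^sub>C b) ` B)" .
qed

lemma exists_nontrivial_linear_relation:
  fixes f :: "'i \<Rightarrow> 'a::real_vector"
  assumes "finite I" "finite A" "card A < card I" "f ` I \<subseteq> span A"
  obtains c where "\<exists>i\<in>I. c i \<noteq> 0" "(\<Sum>i\<in>I. c i *\<^sub>R f i) = 0"
proof (cases "inj_on f I")
  case False
  then obtain i j where "i \<in> I" "j \<in> I" "i \<noteq> j" "f i = f j"
    by (auto simp: inj_on_def)
  define c where "c k = (if k = i then 1 else if k = j then -1 else 0 :: real)" for k
  have "c k *\<^sub>R f k = (if k = i then f i else 0) - (if k = j then f j else 0)" for k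
    using \<open>i \<noteq> j\<close> by (simp add: c_def)
  then have "(\<Sum>k\<in>I. c k *\<^sub>R f k) = 0"
    using \<open>finite I\<close> \<open>i \<in> I\<close> \<open>j \<in> I\<close> \<open>f i = f j\<close> by (simp add: sum_subtractf)
  moreover have "c i \<noteq> 0"
    by (simp add: c_def)
  ultimately show ?thesis
    using that \<open>i \<in> I\<close> by blast
next
  case True
  then have "card (f ` I) = card I"
    by (rule card_image)
  then have "dependent (f ` I)"
    using independent_span_bound[OF assms(2) _ assms(4)] assms(3) by auto
  then obtain u where "\<exists>v\<in>f ` I. u v \<noteq> 0" "(\<Sum>v\<in>f ` I. u v *\<^sub>R v) = 0"
    using dependent_finite[of "f ` I"] \<open>finite I\<close> by auto
  then show ?thesis
    using that[of "u \<circ> f"] True by (auto simp: sum.reindex)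
qed

lemma independent_meets_subspace:
  fixes Y :: "'a::real_vector set"
  assumes "subspace Y" "finite U" "independent U" "finite V" "card V < card U"
    and cover: "\<And>u. u \<in> U \<Longrightarrow> \<exists>y\<in>Y. \<exists>v\<in>span V. u = y + v"
  obtains z where "z \<in> span U" "z \<in> Y" "z \<noteq> 0"
proof -
  have "\<forall>u\<in>U. \<exists>p. fst p \<in> Y \<and> snd p \<in> span V \<and> u = fst p + snd p"
    using cover by fastforce
  then obtain p where p: "\<And>u. u \<in> U \<Longrightarrow> fst (p u) \<in> Y \<and> snd (p u) \<in> span V \<and> u = fst (p u) + snd (p u)"
    by metis
  define y v where "y u = fst (p u)" and "v u = snd (p u)" for u
  have yv: "\<And>u. u \<in> U \<Longrightarrow> y u \<in> Y \<and> v u \<in> span V \<and> u = y u + v u"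
    using p by (simp add: y_def v_def)
  \<comment> \<open>a relation among the \<open>span V\<close>-components of \<open>U\<close> yields a combination of \<open>U\<close> lying in \<open>Y\<close>\<close>
  obtain c where c: "\<exists>u\<in>U. c u \<noteq> 0" "(\<Sum>u\<in>U. c u *\<^sub>R v u) = 0"
    using exists_nontrivial_linear_relation[of U V v] assms(2,4,5) yv by blast
  define z where "z = (\<Sum>u\<in>U. c u *\<^sub>R u)"
  have "z = (\<Sum>u\<in>U. c u *\<^sub>R y u + c u *\<^sub>R v u)"
    unfolding z_def using yv by (intro sum.cong refl) (simp flip: scaleR_add_right)
  also have "\<dots> = (\<Sum>u\<in>U. c u *\<^sub>R y u)"
    using c(2) by (simp add: sum.distrib)
  finally have "z \<in> Y"
    using \<open>subspace Y\<close> yv by (simp add: subspace_sum subspace_scale)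
  moreover have "z \<in> span U"
    unfolding z_def by (intro span_sum span_scale span_base)
  moreover have "z \<noteq> 0"
    using c(1) \<open>independent U\<close> dependent_finite[OF \<open>finite U\<close>] unfolding z_def by blast
  ultimately show ?thesis
    using that by blast
qed

lemma subspace_eq_if_dim_le:
  fixes S T :: "'a::real_vector set"
  assumes "subspace S" "subspace T" "S \<subseteq> T" "T \<subseteq> span U" "finite U" "dim T \<le> dim S"
  shows "S = T"
proof (rule ccontr)
  assume "S \<noteq> T"
  then obtain t where t: "t \<in> T" "t \<notin> S"
    using \<open>S \<subseteq> T\<close> by blast
  obtain A where A: "A \<subseteq> S" "independent A" "S \<subseteq> span A" "card A = dim S"
    by (rule basis_exists)
  obtain B where B: "B \<subseteq> T" "independent B" "T \<subseteq> span B" "card B = dim T"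
    by (rule basis_exists)
  have "B \<subseteq> span U" "A \<subseteq> span U"
    using A(1) B(1) assms(3,4) by blast+
  then have "finite B" "finite A"
    using independent_span_bound[OF \<open>finite U\<close>] A(2) B(2) by blast+
  have "t \<notin> span A"
    using t span_minimal[OF A(1) \<open>subspace S\<close>] by blast
  then have "independent (insert t A)"
    using A(2) by (rule independent_insertI)
  moreover have "insert t A \<subseteq> span B"
    using t A(1) B(3) \<open>S \<subseteq> T\<close> by blast
  ultimately have "card (insert t A) \<le> card B"
    using independent_span_bound[OF \<open>finite B\<close>] by blast
  moreover have "t \<notin> A"
    using \<open>t \<notin> span A\<close> span_base by blast
  ultimately show False
    using \<open>finite A\<close> A(4) B(4) assms(6) by simp
qed

lemma decreasing_subspaces_stabilize:
  fixes K :: "nat \<Rightarrow> 'a::real_vector set"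
  assumes "\<And>n. subspace (K n)" "\<And>n. K (Suc n) \<subseteq> K n" "finite U" "\<And>n. K n \<subseteq> span U"
  obtains n0 where "\<And>n. n \<ge> n0 \<Longrightarrow> K n = K n0"
proof -
  obtain n0 where n0: "\<And>n. dim (K n0) \<le> dim (K n)"
    using ex_has_least_nat[of "\<lambda>_. True" 0 "\<lambda>n. dim (K n)"] by blast
  have "K n = K n0" if "n \<ge> n0" for n
    using assms lift_Suc_antimono_le[of K, OF assms(2) that] n0
    by (intro subspace_eq_if_dim_le[of "K n" "K n0" U]) auto
  then show ?thesis
    using that by blast
qed

lemma decreasing_subspaces_common_nonzero:
  fixes K :: "nat \<Rightarrow> 'a::real_vector set"
  assumes "\<And>n. subspace (K n)" "\<And>n. K (Suc n) \<subseteq> K n" "finite U" "\<And>n. K n \<subseteq> span U"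
    and nonzero: "\<And>n. \<exists>z\<in>K n. z \<noteq> 0"
  obtains z where "z \<in> (\<Inter>n. K n)" "z \<noteq> 0"
proof -
  obtain n0 where n0: "\<And>n. n \<ge> n0 \<Longrightarrow> K n = K n0"
    using decreasing_subspaces_stabilize[of K U] assms(1-4) by blast
  obtain z where "z \<in> K n0" "z \<noteq> 0"
    using nonzero by blast
  moreover have "K n0 \<subseteq> K n" for n
    using n0[of n] lift_Suc_antimono_le[of K, OF assms(2), of n n0] by (cases "n \<le> n0") auto
  ultimately show ?thesis
    using that by blast
qed

lemma finite_span_if_independent_card_bounded:
  assumes "\<And>U. finite U \<Longrightarrow> independent U \<Longrightarrow> U \<subseteq> X \<Longrightarrow> card U \<le> q"
  obtains A where "finite A" "X \<subseteq> span A"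
proof -
  obtain B where B: "B \<subseteq> X" "independent B" "X \<subseteq> span B"
    using maximal_independent_subset[of X] by blast
  have "finite B"
  proof (rule ccontr)
    assume "infinite B"
    then obtain U where "finite U" "card U = Suc q" "U \<subseteq> B"
      using infinite_arbitrarily_large by blast
    then show False
      using assms[of U] independent_mono[OF B(2)] B(1) by auto
  qed
  then show ?thesis
    using that B by blast
qed

section \<open>The hyperrange\<close>

definition hyperrange :: "('a \<Rightarrow> 'a) \<Rightarrow> 'a set" where
  "hyperrange T = (\<Inter>n. range (T ^^ n))"

lemma analytic_op_iff_hyperrange: "analytic_op T \<longleftrightarrow> hyperrange T = {0}"
proof -
  have "(\<Inter>m\<in>{1..}. range (T ^^ m)) = hyperrange T"
    unfolding hyperrange_def
  proof (intro equalityI subsetI INT_I)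
    fix x n
    assume "x \<in> (\<Inter>m\<in>{1..}. range (T ^^ m))"
    then show "x \<in> range (T ^^ n)"
      by (cases n) (auto simp del: funpow.simps)
  qed auto
  then show ?thesis
    by (simp add: analytic_op_def)
qed

lemma funpow_image_subset:
  fixes T :: "'a \<Rightarrow> 'a"
  assumes "T ` W \<subseteq> W"
  shows "(T ^^ n) ` W \<subseteq> W"
  by (induction n) (use assms in auto)

lemma funpow_image_antimono:
  fixes T :: "'a \<Rightarrow> 'a"
  assumes "T ` W \<subseteq> W" "m \<le> n"
  shows "(T ^^ n) ` W \<subseteq> (T ^^ m) ` W"
proof -
  have "(T ^^ n) ` W = (T ^^ m) ` ((T ^^ (n - m)) ` W)"
    using funpow_add[of m "n - m" T] assms(2) by (simp add: image_comp)
  also have "\<dots> \<subseteq> (T ^^ m) ` W"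
    by (intro image_mono funpow_image_subset assms(1))
  finally show ?thesis .
qed

lemma range_funpow_antimono: "m \<le> n \<Longrightarrow> range (T ^^ n) \<subseteq> range (T ^^ m)"
  for T :: "'a \<Rightarrow> 'a"
  by (rule funpow_image_antimono) auto

lemma hyperrange_subset_range: "hyperrange T \<subseteq> range (T ^^ n)" for T :: "'a \<Rightarrow> 'a"
  by (auto simp: hyperrange_def)

lemma hyperrange_invariant:
  fixes T :: "'a \<Rightarrow> 'a"
  assumes "x \<in> hyperrange T"
  shows "T x \<in> hyperrange T"
  unfolding hyperrange_def
proof
  fix n
  obtain a where "x = (T ^^ n) a"
    using assms hyperrange_subset_range[of T n] by auto
  then have "T x = (T ^^ n) (T a)"
    by (simp add: funpow_swap1)
  then show "T x \<in> range (T ^^ n)"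
    by simp
qed

lemma linear_funpow:
  fixes T :: "'a::real_vector \<Rightarrow> 'a"
  shows "linear T \<Longrightarrow> linear (T ^^ n)"
  by (induction n) (simp_all add: linear_id linear_compose)

lemma subspace_range_funpow:
  fixes T :: "'a::real_vector \<Rightarrow> 'a"
  shows "linear T \<Longrightarrow> subspace (range (T ^^ n))"
  by (intro linear_subspace_image linear_funpow subspace_UNIV)

text \<open>If the kernel is finite-dimensional, the nested subspaces \<open>ker T \<inter> range (T ^^ m)\<close>
  stabilize; a preimage chosen in the stable range can then be corrected into every
  \<open>range (T ^^ m)\<close> by a kernel element.\<close>

lemma hyperrange_surj:
  fixes T :: "'a::real_vector \<Rightarrow> 'a"
  assumes lin: "linear T" and "finite A" and kernel: "{x. T x = 0} \<subseteq> span A"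
    and y: "y \<in> hyperrange T"
  obtains z where "z \<in> hyperrange T" "T z = y"
proof -
  define K where "K m = {x. T x = 0} \<inter> range (T ^^ m)" for m
  have "subspace (K m)" for m
    unfolding K_def by (intro subspace_inter subspace_range_funpow linear_subspace_kernel lin)
  moreover have "K (Suc m) \<subseteq> K m" for m
    unfolding K_def using range_funpow_antimono[of m "Suc m" T] by auto
  moreover have "K m \<subseteq> span A" for m
    using kernel by (auto simp: K_def)
  ultimately obtain m0 where m0: "\<And>m. m \<ge> m0 \<Longrightarrow> K m = K m0"
    using decreasing_subspaces_stabilize[of K A] \<open>finite A\<close> by blast
  have preimage: "\<exists>z\<in>range (T ^^ m). T z = y" for m
  proof -
    obtain a where "y = (T ^^ Suc m) a"
      using hyperrange_subset_range[of T "Suc m"] y by auto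
    then show ?thesis
      by auto
  qed
  then obtain z0 where z0: "z0 \<in> range (T ^^ m0)" "T z0 = y"
    by blast
  have "z0 \<in> range (T ^^ m)" for m
  proof (cases "m \<le> m0")
    case True
    then show ?thesis
      using range_funpow_antimono[of m m0 T] z0(1) by blast
  next
    case False
    obtain zm where zm: "zm \<in> range (T ^^ m)" "T zm = y"
      using preimage by blast
    have "zm \<in> range (T ^^ m0)"
      using zm(1) range_funpow_antimono[of m0 m T] False by auto
    then have "zm - z0 \<in> range (T ^^ m0)"
      using z0(1) by (rule subspace_diff[OF subspace_range_funpow[OF lin]])
    moreover have "T (zm - z0) = 0"
      using z0(2) zm(2) by (simp add: linear_diff[OF lin])
    ultimately have "zm - z0 \<in> K m"
      using m0[of m] False by (simp add: K_def)
    then have "zm - z0 \<in> range (T ^^ m)"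
      by (simp add: K_def)
    from subspace_diff[OF subspace_range_funpow[OF lin] zm(1) this] show ?thesis
      by simp
  qed
  then have "z0 \<in> hyperrange T"
    by (simp add: hyperrange_def)
  with z0(2) show ?thesis
    using that by blast
qed

lemma hyperrange_surj_funpow:
  fixes T :: "'a::real_vector \<Rightarrow> 'a"
  assumes "linear T" "finite A" "{x. T x = 0} \<subseteq> span A" "y \<in> hyperrange T"
  obtains z where "z \<in> hyperrange T" "(T ^^ k) z = y"
proof (induction k arbitrary: thesis)
  case 0
  then show ?case
    using assms(4) by simp
next
  case (Suc k)
  then obtain z where "z \<in> hyperrange T" "(T ^^ k) z = y"
    by blast
  moreover obtain z' where "z' \<in> hyperrange T" "T z' = z"
    using hyperrange_surj[OF assms(1-3) \<open>z \<in> hyperrange T\<close>] by blast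
  moreover have "(T ^^ Suc k) z' = (T ^^ k) (T z')"
    by (simp add: funpow_swap1)
  ultimately show ?case
    using Suc.prems by simp
qed

lemma funpow_image_meets_span:
  fixes T :: "'a::real_vector \<Rightarrow> 'a"
  assumes lin: "linear T" and "subspace W"
    and "finite V" and decomp: "\<And>x. \<exists>w\<in>W. \<exists>v\<in>span V. x = w + v"
    and U: "finite U" "independent U" "U \<subseteq> range (T ^^ n)" "card V < card U"
  obtains z where "z \<in> span U" "z \<in> (T ^^ n) ` W" "z \<noteq> 0"
proof (rule independent_meets_subspace[OF linear_subspace_image[OF linear_funpow[OF lin] \<open>subspace W\<close>]
      U(1,2)])
  show "finite ((T ^^ n) ` V)" "card ((T ^^ n) ` V) < card U"
    using card_image_le[OF \<open>finite V\<close>, of "T ^^ n"] \<open>finite V\<close> U(4) by auto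
  show "\<exists>y\<in>(T ^^ n) ` W. \<exists>v\<in>span ((T ^^ n) ` V). u = y + v" if "u \<in> U" for u
  proof -
    obtain x where x: "u = (T ^^ n) x"
      using \<open>u \<in> U\<close> U(3) by blast
    obtain w v where "w \<in> W" "v \<in> span V" "x = w + v"
      using decomp by blast
    then show ?thesis
      using x linear_span_image[OF linear_funpow[OF lin], of n V]
      by (auto simp: linear_add[OF linear_funpow[OF lin]])
  qed
qed

lemma hyperrange_independent_card_le:
  fixes T :: "'a::real_vector \<Rightarrow> 'a"
  assumes lin: "linear T" and W: "subspace W" "T ` W \<subseteq> W"
    and "finite V" and decomp: "\<And>x. \<exists>w\<in>W. \<exists>v\<in>span V. x = w + v"
    and core: "(\<Inter>n. (T ^^ n) ` W) = {0}"
    and U: "finite U" "independent U" "U \<subseteq> hyperrange T"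
  shows "card U \<le> card V"
proof (rule ccontr)
  assume "\<not> card U \<le> card V"
  define K where "K n = span U \<inter> (T ^^ n) ` W" for n
  have "\<exists>z\<in>K n. z \<noteq> 0" for n
    using funpow_image_meets_span[OF lin W(1) \<open>finite V\<close> decomp U(1,2), of n]
      U(3) hyperrange_subset_range[of T n] \<open>\<not> card U \<le> card V\<close>
    by (metis IntI K_def not_le order_trans)
  moreover have "subspace (K n)" for n
    unfolding K_def by (intro subspace_inter subspace_span linear_subspace_image linear_funpow lin W(1))
  moreover have "K (Suc n) \<subseteq> K n" for n
    unfolding K_def using funpow_image_antimono[OF W(2), of n "Suc n"] by auto
  moreover have "K n \<subseteq> span U" for n
    by (auto simp: K_def)
  ultimately obtain z where "z \<in> (\<Inter>n. K n)" "z \<noteq> 0"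
    using decreasing_subspaces_common_nonzero[of K U] U(1) by blast
  then show False
    using core by (auto simp: K_def)
qed

lemma kernel_independent_card_le:
  fixes T :: "'a::real_vector \<Rightarrow> 'a"
  assumes lin: "linear T" and W: "subspace W" "inj_on T W"
    and "finite V" and decomp: "\<And>x. \<exists>w\<in>W. \<exists>v\<in>span V. x = w + v"
    and U: "finite U" "independent U" "U \<subseteq> {x. T x = 0}"
  shows "card U \<le> card V"
proof (rule ccontr)
  assume "\<not> card U \<le> card V"
  then obtain z where "z \<in> span U" "z \<in> W" "z \<noteq> 0"
    using independent_meets_subspace[OF W(1) U(1,2) \<open>finite V\<close>] decomp by (metis not_le)
  moreover have "span U \<subseteq> {x. T x = 0}"
    using U(3) by (rule span_minimal[OF _ linear_subspace_kernel[OF lin]])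
  ultimately show False
    using W linear_injective_on_subspace_0[OF lin W(1)] by blast
qed

section \<open>Polynomials in an operator\<close>

definition poly_op :: "('a::chilbert \<Rightarrow> 'a) \<Rightarrow> complex poly \<Rightarrow> 'a \<Rightarrow> 'a" where
  "poly_op T p x = fold_coeffs (\<lambda>a y. a *\<^sub>C x + T y) p 0"

context
  fixes T :: "'a::chilbert \<Rightarrow> 'a"
  assumes lin: "cblinear T"
begin

lemma poly_op_0 [simp]: "poly_op T 0 x = 0"
  by (simp add: poly_op_def)

lemma poly_op_pCons: "poly_op T (pCons a p) x = a *\<^sub>C x + T (poly_op T p x)"
  by (cases "p = 0 \<and> a = 0") (auto simp: poly_op_def cblinear_zero[OF lin])

lemma poly_op_const: "poly_op T [:a:] x = a *\<^sub>C x"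
  by (simp add: poly_op_pCons cblinear_zero[OF lin])

lemma poly_op_add: "poly_op T (p + q) x = poly_op T p x + poly_op T q x"
  by (induction p q rule: poly_induct2)
    (simp_all add: poly_op_pCons cblinear_add[OF lin] scaleC_add_left algebra_simps)

lemma poly_op_diff: "poly_op T (p - q) x = poly_op T p x - poly_op T q x"
  using poly_op_add[of "p - q" q x] by (simp add: algebra_simps)

lemma poly_op_smult: "poly_op T (smult c p) x = c *\<^sub>C poly_op T p x"
  by (induction p) (simp_all add: poly_op_pCons cblinear_scaleC[OF lin] scaleC_add_right scaleC_scaleC)

lemma poly_op_commute: "poly_op T p (T x) = T (poly_op T p x)"
  by (induction p) (simp_all add: poly_op_pCons cblinear_add[OF lin] cblinear_scaleC[OF lin] cblinear_zero[OF lin])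

lemma poly_op_monom: "poly_op T (monom c n) x = c *\<^sub>C (T ^^ n) x"
  by (induction n) (simp_all add: monom_0 monom_Suc poly_op_pCons poly_op_const cblinear_scaleC[OF lin]
      cblinear_zero[OF lin])

lemma poly_op_sum: "poly_op T (\<Sum>i\<in>I. p i) x = (\<Sum>i\<in>I. poly_op T (p i) x)"
  by (induction I rule: infinite_finite_induct) (simp_all add: poly_op_add)

lemma complex_poly_linear_factor:
  fixes p :: "complex poly"
  assumes "degree p = Suc d"
  obtains c q where "p = [:-c, 1:] * q" "q \<noteq> 0" "degree q = d"
proof -
  obtain c where "poly p c = 0"
    using alg_closed_imp_poly_has_root[of p] assms by auto
  then obtain q where p: "p = [:-c, 1:] * q"
    by (metis dvdE poly_eq_0_iff_dvd)
  then have "q \<noteq> 0"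
    using assms by auto
  then have "degree p = Suc (degree q)"
    unfolding p by (subst degree_mult_eq) auto
  then show ?thesis
    using that p \<open>q \<noteq> 0\<close> assms by simp
qed

lemma poly_op_linear_factor: "poly_op T ([:-c, 1:] * q) z = T (poly_op T q z) - c *\<^sub>C poly_op T q z"
  by (simp add: poly_op_diff poly_op_pCons poly_op_smult)

text \<open>Split off a linear factor \<open>X - c\<close> of \<open>p\<close>: either \<open>c \<noteq> 0\<close> is an eigenvalue with
  eigenvector \<open>q(T) z\<close>, or the cofactor \<open>q\<close> annihilates \<open>z\<close> (if \<open>q(T) z = 0\<close>) or \<open>T z\<close> (if \<open>c = 0\<close>).\<close>

lemma poly_op_annihilates_imp_eigenvalue:
  assumes "p \<noteq> 0" "poly_op T p z = 0" "(T ^^ degree p) z \<noteq> 0"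
  shows "\<exists>c. c \<noteq> 0 \<and> eigenvalue T c"
  using assms
proof (induction "degree p" arbitrary: p z)
  case 0
  then obtain a where "p = [:a:]" "a \<noteq> 0"
    by (metis degree_eq_zeroE pCons_0_0)
  then have "z = 0"
    using "0.prems"(2) scaleC_scaleC[of "inverse a" a z] by (simp add: poly_op_const scaleC_one)
  then show ?case
    using "0.prems"(3) "0.hyps" by simp
next
  case (Suc d)
  obtain c q where p: "p = [:-c, 1:] * q" and "q \<noteq> 0" "degree q = d"
    using complex_poly_linear_factor[OF Suc.hyps(2)[symmetric]] by blast
  define w where "w = poly_op T q z"
  have Tw: "T w = c *\<^sub>C w"
    using Suc.prems(2) unfolding p poly_op_linear_factor w_def by simp
  have "T ((T ^^ d) z) \<noteq> 0"
    using Suc.prems(3) unfolding Suc.hyps(2)[symmetric] by simp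
  then have "(T ^^ d) z \<noteq> 0"
    using cblinear_zero[OF lin] by metis
  have "(T ^^ d) (T z) \<noteq> 0"
    using \<open>T ((T ^^ d) z) \<noteq> 0\<close> by (simp add: funpow_swap1)
  consider "w = 0" | "c = 0" | "w \<noteq> 0" "c \<noteq> 0"
    by blast
  then show ?case
  proof cases
    case 1
    then show ?thesis
      using Suc.hyps(1)[of q z] \<open>q \<noteq> 0\<close> \<open>degree q = d\<close> \<open>(T ^^ d) z \<noteq> 0\<close> by (simp add: w_def)
  next
    case 2
    then show ?thesis
      using Suc.hyps(1)[of q "T z"] \<open>q \<noteq> 0\<close> \<open>degree q = d\<close> \<open>(T ^^ d) (T z) \<noteq> 0\<close> Tw
      by (simp add: w_def poly_op_commute)
  next
    case 3
    then show ?thesis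
      using Tw unfolding eigenvalue_def by blast
  qed
qed

lemma exists_annihilating_poly:
  assumes "finite A" "\<And>i. (T ^^ i) y \<in> span A"
  obtains p where "p \<noteq> 0" "degree p \<le> card A" "poly_op T p y = 0"
proof -
  obtain c where c: "\<exists>i\<in>{..card A}. c i \<noteq> 0" "(\<Sum>i\<le>card A. c i *\<^sub>R (T ^^ i) y) = 0"
    using exists_nontrivial_linear_relation[of "{..card A}" A "\<lambda>i. (T ^^ i) y"] assms by auto
  define p where "p = (\<Sum>i\<le>card A. monom (complex_of_real (c i)) i)"
  obtain i where "i \<le> card A" "c i \<noteq> 0"
    using c(1) by auto
  then have "coeff p i \<noteq> 0"
    by (simp add: p_def coeff_sum)
  then have "p \<noteq> 0"
    by auto
  moreover have "degree p \<le> card A"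
    unfolding p_def by (intro degree_sum_le) (auto intro: order_trans[OF degree_monom_le])
  moreover have "poly_op T p y = 0"
    using c(2) by (simp add: p_def poly_op_sum poly_op_monom scaleC_of_real)
  ultimately show ?thesis
    using that by blast
qed

lemma finite_dim_hyperrange_imp_eigenvalue:
  assumes "finite A" "hyperrange T \<subseteq> span A"
    and surj: "\<And>y k. y \<in> hyperrange T \<Longrightarrow> \<exists>z\<in>hyperrange T. (T ^^ k) z = y"
    and "x \<in> hyperrange T" "x \<noteq> 0"
  shows "\<exists>c. c \<noteq> 0 \<and> eigenvalue T c"
proof -
  obtain y where y: "y \<in> hyperrange T" "(T ^^ Suc (card A)) y = x"
    using surj[OF \<open>x \<in> hyperrange T\<close>, of "Suc (card A)"] by blast
  have "(T ^^ i) y \<in> hyperrange T" for i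
  proof (induction i)
    case 0
    show ?case
      using y(1) by simp
  next
    case (Suc i)
    then show ?case
      unfolding funpow.simps(2) o_apply by (rule hyperrange_invariant)
  qed
  then have "(T ^^ i) y \<in> span A" for i
    using assms(2) by blast
  then obtain p where p: "p \<noteq> 0" "degree p \<le> card A" "poly_op T p y = 0"
    using exists_annihilating_poly[OF assms(1)] by blast
  \<comment> \<open>\<open>T ^^ degree p\<close> cannot kill \<open>y\<close>, since a further power of \<open>T\<close> maps it to \<open>x \<noteq> 0\<close>\<close>
  have "(T ^^ (Suc (card A) - degree p)) ((T ^^ degree p) y) = (T ^^ (Suc (card A) - degree p + degree p)) y"
    by (simp add: funpow_add)
  also have "\<dots> = x"
    using y(2) p(2) by simp
  finally have "(T ^^ (Suc (card A) - degree p)) ((T ^^ degree p) y) = x" .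
  then have "(T ^^ degree p) y \<noteq> 0"
    using \<open>x \<noteq> 0\<close> funpow_cblinear_zero[OF lin, of "Suc (card A) - degree p"] by auto
  with p(1,3) show ?thesis
    by (rule poly_op_annihilates_imp_eigenvalue)
qed

end

section \<open>Contractions with finite-dimensional defect\<close>

lemma csubspace_cblinear_image:
  assumes "cblinear S" "csubspace W"
  shows "csubspace (S ` W)"
  unfolding csubspace_def
proof (intro conjI ballI allI)
  show "0 \<in> S ` W"
    using assms by (metis csubspace_0 cblinear_zero image_eqI)
  show "x + y \<in> S ` W" if "x \<in> S ` W" "y \<in> S ` W" for x y
    using that assms by (auto simp: image_iff cblinear_add[symmetric] intro: csubspace_add)
  show "c *\<^sub>C x \<in> S ` W" if "x \<in> S ` W" for c x
    using that assms by (auto simp: image_iff cblinear_scaleC[symmetric] intro: csubspace_scaleC)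
qed

lemma csubspace_INT: "(\<And>i. csubspace (K i)) \<Longrightarrow> csubspace (\<Inter>i. K i)"
  unfolding csubspace_def by blast

lemma closed_isometric_image:
  assumes S: "cblinear S" and W: "csubspace W" "closed W"
    and iso: "\<And>x. x \<in> W \<Longrightarrow> norm (S x) = norm x"
  shows "closed (S ` W)"
  unfolding closed_sequential_limits
proof (intro allI impI)
  fix y l
  assume "(\<forall>k. y k \<in> S ` W) \<and> y \<longlonglongrightarrow> l"
  then obtain w where w: "\<And>k. w k \<in> W" "\<And>k. y k = S (w k)" and "y \<longlonglongrightarrow> l"
    unfolding image_iff by metis
  \<comment> \<open>\<open>S\<close> is isometric on \<open>W\<close>, so preimages of a Cauchy sequence are Cauchy\<close>
  have "norm (w k - w j) = norm (y k - y j)" for k j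
    using iso[OF csubspace_diff[OF W(1) w(1) w(1)]] by (simp add: w(2) cblinear_diff[OF S])
  moreover have "Cauchy y"
    using \<open>y \<longlonglongrightarrow> l\<close> by (rule LIMSEQ_imp_Cauchy)
  ultimately have "Cauchy w"
    unfolding Cauchy_iff by simp
  then obtain w0 where "w \<longlonglongrightarrow> w0"
    using Cauchy_convergent_iff convergent_def by blast
  then have "w0 \<in> W"
    using closed_sequentially[OF W(2)] w(1) by blast
  have "(\<lambda>k. S (w k)) \<longlonglongrightarrow> S w0"
    by (rule bounded_linear.tendsto[OF cblinear_bounded_linear[OF S] \<open>w \<longlonglongrightarrow> w0\<close>])
  moreover have "(\<lambda>k. S (w k)) = y"
    using w(2) by auto
  ultimately have "y \<longlonglongrightarrow> S w0"
    by simp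
  then have "l = S w0"
    using \<open>y \<longlonglongrightarrow> l\<close> LIMSEQ_unique by blast
  then show "l \<in> S ` W"
    using \<open>w0 \<in> W\<close> by blast
qed

lemma eigenvalue_imp_not_analytic:
  assumes lin: "cblinear T" and "c \<noteq> 0" "eigenvalue T c"
  shows "\<not> analytic_op T"
proof -
  obtain x where x: "x \<noteq> 0" "T x = c *\<^sub>C x"
    using assms(3) by (auto simp: eigenvalue_def)
  have powers: "(T ^^ m) x = (c ^ m) *\<^sub>C x" for m
    by (induction m) (simp_all add: scaleC_one cblinear_scaleC[OF lin] x(2) scaleC_scaleC mult.commute)
  have "(T ^^ m) ((inverse c ^ m) *\<^sub>C x) = x" for m
    using \<open>c \<noteq> 0\<close>
    by (simp add: cblinear_scaleC[OF cblinear_funpow[OF lin]] powers scaleC_scaleC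
        power_mult_distrib[symmetric] scaleC_one)
  then have "x \<in> hyperrange T"
    unfolding hyperrange_def by (metis INT_I rangeI)
  then show ?thesis
    using x(1) by (auto simp: analytic_op_iff_hyperrange)
qed

locale finite_defect_contraction =
  fixes T :: "'a::chilbert \<Rightarrow> 'a"
  assumes contraction: "contraction_op T"
    and cnu: "completely_non_unitary T"
    and defect_subset: "defect_space T \<subseteq> defect_space (adj T)"
    and finite_defect: "finite_dim_set (defect_space (adj T))"
begin

lemma T_cblinear: "cblinear T"
  and norm_T_le: "norm (T x) \<le> norm x"
  using contraction by (simp_all add: contraction_op_def)

lemma adj_T_cblinear: "cblinear (adj T)"
  by (rule adj_cblinear[OF T_cblinear])

lemma selfadjoint_contraction_adj_T: "selfadjoint_contraction (\<lambda>x. adj T (T x))"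
proof
  show "cblinear (\<lambda>x. adj T (T x))"
    by (rule cblinear_compose[OF adj_T_cblinear T_cblinear])
  show "selfadjoint (\<lambda>x. adj T (T x))"
    unfolding selfadjoint_def by (simp add: cinner_adj_right[OF T_cblinear] cinner_adj_left[OF T_cblinear])
  show "norm (adj T (T x)) \<le> norm x" for x
    using norm_adj_le[OF T_cblinear norm_T_le] norm_T_le order_trans by blast
qed

lemma selfadjoint_contraction_T_adj: "selfadjoint_contraction (\<lambda>x. T (adj T x))"
proof
  show "cblinear (\<lambda>x. T (adj T x))"
    by (rule cblinear_compose[OF T_cblinear adj_T_cblinear])
  show "selfadjoint (\<lambda>x. T (adj T x))"
    unfolding selfadjoint_def by (simp add: cinner_adj_right[OF T_cblinear] cinner_adj_left[OF T_cblinear])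
  show "norm (T (adj T x)) \<le> norm x" for x
    using norm_adj_le[OF T_cblinear norm_T_le] norm_T_le order_trans by blast
qed

definition isometric_part :: "'a set" where
  "isometric_part = {x. adj T (T x) = x}"

lemma csubspace_isometric_part: "csubspace isometric_part"
  unfolding isometric_part_def csubspace_def
  by (simp add: cblinear_add[OF T_cblinear] cblinear_add[OF adj_T_cblinear] cblinear_scaleC[OF T_cblinear]
      cblinear_scaleC[OF adj_T_cblinear] cblinear_zero[OF T_cblinear] cblinear_zero[OF adj_T_cblinear])

lemma closed_isometric_part: "closed isometric_part"
proof -
  have "continuous_on UNIV (\<lambda>x. adj T (T x))"
    using bounded_linear.continuous_on[OF cblinear_bounded_linear[OF cblinear_compose[OF adj_T_cblinear T_cblinear]]
        continuous_on_id] by simp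
  then show ?thesis
    unfolding isometric_part_def by (intro closed_Collect_eq continuous_on_id)
qed

lemma norm_T_isometric_part:
  assumes "x \<in> isometric_part"
  shows "norm (T x) = norm x"
proof -
  have "(norm (T x))\<^sup>2 = (norm x)\<^sup>2"
    using assms cinner_adj_right[OF T_cblinear, of x "T x"]
    by (simp add: isometric_part_def power2_norm_eq_cinner)
  then show ?thesis
    by (simp add: power2_eq_iff_nonneg)
qed

lemma inj_on_isometric_part: "inj_on T isometric_part"
proof (rule inj_onI)
  fix x y
  assume "x \<in> isometric_part" "y \<in> isometric_part" "T x = T y"
  then have "norm (x - y) = norm (T (x - y))"
    using norm_T_isometric_part csubspace_diff[OF csubspace_isometric_part] by simp
  then show "x = y"
    using \<open>T x = T y\<close> by (simp add: cblinear_diff[OF T_cblinear])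
qed

lemma orthogonal_defect_space_imp_isometric:
  assumes "\<And>d. d \<in> defect_space T \<Longrightarrow> cinner d x = 0"
  shows "x \<in> isometric_part"
proof -
  interpret D: selfadjoint_contraction "\<lambda>x. adj T (T x)"
    by (rule selfadjoint_contraction_adj_T)
  let ?D = "op_sqrt (\<lambda>x. x - adj T (T x))"
  have "cinner (?D y) x = 0" for y
    using assms[of "?D y"] closure_subset[of "range ?D"] by (auto simp: defect_space_def)
  then have "cinner y (?D x) = 0" for y
    by (simp add: selfadjointD[OF D.op_sqrt_selfadjoint])
  then have "?D x = 0"
    using cinner_self_eq_0 by blast
  then have "x - adj T (T x) = 0"
    using D.op_sqrt_square[of x] cblinear_zero[OF positive_op_cblinear[OF D.op_sqrt_positive]] by simp
  then show ?thesis
    by (simp add: isometric_part_def)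
qed

lemma T_isometric_part_orthogonal_adj_defect_space:
  assumes "w \<in> isometric_part" "d \<in> defect_space (adj T)"
  shows "cinner d (T w) = 0"
proof -
  interpret D: selfadjoint_contraction "\<lambda>x. T (adj T x)"
    by (rule selfadjoint_contraction_T_adj)
  let ?D = "op_sqrt (\<lambda>x. x - T (adj T x))"
  have "cinner (?D (T w)) (?D (T w)) = cinner (T w) (T w - T (adj T (T w)))"
    by (simp add: selfadjointD[OF D.op_sqrt_selfadjoint] D.op_sqrt_square)
  then have "?D (T w) = 0"
    using assms(1) by (simp add: isometric_part_def)
  then have "range ?D \<subseteq> {d. cinner d (T w) = 0}"
    by (auto simp: selfadjointD[OF D.op_sqrt_selfadjoint])
  moreover have "closed {d. cinner d (T w) = 0}"
    by (intro closed_Collect_eq continuous_on_const continuous_on_id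
        bounded_linear.continuous_on[OF bounded_linear_cinner_left])
  ultimately have "defect_space (adj T) \<subseteq> {d. cinner d (T w) = 0}"
    unfolding defect_space_def adj_adj[OF T_cblinear] by (rule closure_minimal)
  then show ?thesis
    using assms(2) by blast
qed

text \<open>This is where \<open>defect_space T \<subseteq> defect_space (adj T)\<close> enters: \<open>T\<close> maps the isometric
  part, the orthogonal complement of \<open>defect_space T\<close>, into the orthogonal complement of
  \<open>defect_space (adj T)\<close>.\<close>

lemma T_isometric_part: "T ` isometric_part \<subseteq> isometric_part"
  using orthogonal_defect_space_imp_isometric T_isometric_part_orthogonal_adj_defect_space
    defect_subset by blast

lemma isometric_part_finite_complement:
  obtains V where "finite V" "\<And>x. \<exists>w\<in>isometric_part. \<exists>v\<in>span V. x = w + v"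
proof -
  obtain B where B: "finite B" "defect_space (adj T) = cspan B"
    using finite_defect unfolding finite_dim_set_def by blast
  have "csubspace (defect_space (adj T))"
    using B csubspace_cspan by simp
  moreover have "closed (defect_space (adj T))"
    by (simp add: defect_space_def)
  ultimately have "\<exists>w\<in>isometric_part. \<exists>v\<in>span (B \<union> (\<lambda>b. \<i> *\<^sub>C b) ` B). x = w + v" for x
  proof (rule orthogonal_decomposition)
    fix k
    assume k: "k \<in> defect_space (adj T)" "\<And>v. v \<in> defect_space (adj T) \<Longrightarrow> cinner v (x - k) = 0"
    have "x - k \<in> isometric_part"
      using k(2) defect_subset by (intro orthogonal_defect_space_imp_isometric) blast
    moreover have "k \<in> span (B \<union> (\<lambda>b. \<i> *\<^sub>C b) ` B)"
      using k(1) B cspan_subset_span by blast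
    ultimately show ?thesis
      by force
  qed
  then show ?thesis
    using that B(1) by blast
qed

lemma funpow_isometric_part:
  assumes "x \<in> isometric_part"
  shows "(T ^^ n) x \<in> isometric_part" "norm ((T ^^ n) x) = norm x"
  using assms T_isometric_part by (induction n) (auto simp: norm_T_isometric_part)

definition unitary_core :: "'a set" where
  "unitary_core = (\<Inter>n. (T ^^ n) ` isometric_part)"

lemma unitary_core_subset: "unitary_core \<subseteq> isometric_part"
  using INT_lower[of 0 UNIV "\<lambda>n. (T ^^ n) ` isometric_part"] by (simp add: unitary_core_def)

lemma T_unitary_core: "T ` unitary_core = unitary_core"
proof
  show "T ` unitary_core \<subseteq> unitary_core"
  proof (clarify, unfold unitary_core_def, rule INT_I)
    fix x n
    assume "x \<in> (\<Inter>n. (T ^^ n) ` isometric_part)"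
    then obtain w where "w \<in> isometric_part" "x = (T ^^ n) w"
      by blast
    then have "T w \<in> isometric_part" "T x = (T ^^ n) (T w)"
      using T_isometric_part by (auto simp: funpow_swap1)
    then show "T x \<in> (T ^^ n) ` isometric_part"
      by blast
  qed
next
  show "unitary_core \<subseteq> T ` unitary_core"
  proof
    fix y
    assume y: "y \<in> unitary_core"
    have preimage: "\<exists>w\<in>isometric_part. y = T ((T ^^ n) w)" for n
    proof -
      have "y \<in> (T ^^ Suc n) ` isometric_part"
        using y by (simp add: unitary_core_def del: funpow.simps)
      then show ?thesis
        by auto
    qed
    obtain w0 where w0: "w0 \<in> isometric_part" "y = T w0"
      using preimage[of 0] by auto
    \<comment> \<open>every preimage of \<open>y\<close> in \<open>(T ^^ Suc n) ` isometric_part\<close> passes through \<open>w0\<close>, by injectivity\<close>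
    have "w0 \<in> (T ^^ n) ` isometric_part" for n
    proof -
      obtain w where w: "w \<in> isometric_part" "y = T ((T ^^ n) w)"
        using preimage by blast
      then have "(T ^^ n) w = w0"
        using inj_onD[OF inj_on_isometric_part] funpow_isometric_part(1)[OF w(1)] w0 by metis
      then show ?thesis
        using w(1) by blast
    qed
    then show "y \<in> T ` unitary_core"
      using w0(2) by (auto simp: unitary_core_def)
  qed
qed

text \<open>On \<open>unitary_core\<close> the operator \<open>T\<close> is unitary, and \<open>T\<^sup>*\<close> acts as its inverse;
  complete non-unitarity therefore kills it.\<close>

lemma unitary_core_eq_0: "unitary_core = {0}"
proof -
  have "csubspace unitary_core"
    unfolding unitary_core_def
    by (intro csubspace_INT csubspace_cblinear_image cblinear_funpow T_cblinear csubspace_isometric_part)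
  moreover have "closed unitary_core"
    unfolding unitary_core_def
    by (intro closed_INT ballI closed_isometric_image cblinear_funpow T_cblinear csubspace_isometric_part
        closed_isometric_part funpow_isometric_part(2))
  moreover have "adj T ` unitary_core \<subseteq> unitary_core"
  proof
    fix z
    assume "z \<in> adj T ` unitary_core"
    then obtain y where "y \<in> unitary_core" "z = adj T y"
      by blast
    moreover from this(1) have "y \<in> T ` unitary_core"
      using T_unitary_core by simp
    ultimately obtain w where "w \<in> unitary_core" "z = adj T (T w)"
      by blast
    then show "z \<in> unitary_core"
      using unitary_core_subset by (auto simp: isometric_part_def)
  qed
  moreover have "unitary_on T unitary_core"
    unfolding unitary_on_def using T_unitary_core unitary_core_subset norm_T_isometric_part by blast
  ultimately show ?thesis
    using cnu T_unitary_core unfolding completely_non_unitary_def reducing_subspace_def by blast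
qed

lemma hyperrange_nonzero_imp_eigenvalue:
  assumes "hyperrange T \<noteq> {0}"
  shows "\<exists>c. c \<noteq> 0 \<and> eigenvalue T c"
proof -
  obtain V where V: "finite V" "\<And>x. \<exists>w\<in>isometric_part. \<exists>v\<in>span V. x = w + v"
    using isometric_part_finite_complement by blast
  have "linear T" "subspace isometric_part"
    by (simp_all add: cblinear_linear T_cblinear csubspace_imp_subspace csubspace_isometric_part)
  have kernel_bound: "card U \<le> card V" if "finite U" "independent U" "U \<subseteq> {x. T x = 0}" for U
    using kernel_independent_card_le[OF \<open>linear T\<close> \<open>subspace isometric_part\<close> inj_on_isometric_part V that] .
  obtain K where K: "finite K" "{x. T x = 0} \<subseteq> span K"
    by (rule finite_span_if_independent_card_bounded[OF kernel_bound])
  have hyperrange_bound: "card U \<le> card V" if "finite U" "independent U" "U \<subseteq> hyperrange T" for U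
    using hyperrange_independent_card_le[OF \<open>linear T\<close> \<open>subspace isometric_part\<close> T_isometric_part V
        unitary_core_eq_0[unfolded unitary_core_def] that] .
  obtain A where A: "finite A" "hyperrange T \<subseteq> span A"
    by (rule finite_span_if_independent_card_bounded[OF hyperrange_bound])
  have "0 \<in> hyperrange T"
    by (auto simp: hyperrange_def funpow_cblinear_zero[OF T_cblinear] intro: range_eqI[where x=0])
  then obtain x where "x \<in> hyperrange T" "x \<noteq> 0"
    using assms by blast
  moreover have "\<exists>z\<in>hyperrange T. (T ^^ k) z = y" if "y \<in> hyperrange T" for y k
    using hyperrange_surj_funpow[OF \<open>linear T\<close> K that] by blast
  ultimately show ?thesis
    using finite_dim_hyperrange_imp_eigenvalue[OF T_cblinear A] by blast
qed

end

theorem corollary4p4: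
  fixes T :: "'a::chilbert \<Rightarrow> 'a"
  assumes "separable_space TYPE('a)"
    and "\<not> finite_dim_set (UNIV :: 'a set)"
    and "contraction_op T"
    and "completely_non_unitary T"
    and "\<not> isometry_op T"
    and "defect_space T \<subseteq> defect_space (adj T)"
    and "finite_dim_set (defect_space (adj T))"
  shows "analytic_op T \<longleftrightarrow> \<not> (\<exists>z. z \<noteq> 0 \<and> eigenvalue T z)"
proof -
  interpret finite_defect_contraction T
    using assms(3,4,6,7) by unfold_locales
  show ?thesis
    using eigenvalue_imp_not_analytic[OF T_cblinear] hyperrange_nonzero_imp_eigenvalue
    by (auto simp: analytic_op_iff_hyperrange)
qed

end
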